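(* Let $G$ be a 3-connected graph that contains a non-degenerate vertex-2-edge-separator $(c,e_1,e_2)$. (a) If $c$ is incident to an edge $e_0\in E(G)$ such that $G-e_0-e_1-e_2$ is disconnected with components $C_1$ and $C_2$, let $u_i$ (resp. $v_i$) denote the endvertex of $e_i$ in $C_1$ (resp. $C_2$) for $i\in\{0,1,2\}$, and let $G_1$ (resp. $G_2$) be the graph obtained from $G[V(C_1)]$ (resp. $G[V(C_2)]$) by adding a new vertex $x_1$ (resp. $x_2$) and the edges $u_ix_1$ (resp. $v_ix_2$) for $i\in\{0,1,2\}$. (b) Otherwise, $G-e_1-e_2-c$ has exactly two components $C_1,C_2$; let $u_i$ (resp. $v_i$) be the endvertex of $e_i$ in $C_1$ (resp. $C_2$) for $i\in\{1,2\}$, and let $G_1$ (resp. $G_2$) be obtained from $G[V(C_1)\cup\{c\}]$ (resp. $G[V(C_2)\cup\{c\}]$) by adding a new vertex $x_1$ (resp. $x_2$) and the edges $u_1x_1,u_2x_1,cx_1$ (resp. $v_1x_2,v_2x_2,cx_2$). If $G$ is critical 2.5-connected, then (in either case) $G_1$ and $G_2$ are critical 2.5-connected, 3-connected graphs with fewer vertices than $G$.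
   Context: Graphs are finite, may have parallel edges, no loops. Biconnected: connected and for all pairwise distinct $u,v,w$ there is a $u$-$v$ path avoiding $w$. A biconnected graph $H$ (not a triangle) is 2.5-connected if there is no $(c,e)\in V(H)\times E(H)$ with $H-e-c$ disconnected. A vertex-2-edge-separator of a biconnected graph $H$ is a triple $(c,e_1,e_2)\in V(H)\times E(H)^2$ with $H-e_1-e_2-c$ disconnected. It is degenerate if there is a vertex $u$ of degree 3 whose incident edges are $e_0,e_1,e_2$ and $c$ is the other endvertex of $e_0$; otherwise non-degenerate. $H$ is critical 2.5-connected if it is 2.5-connected and $H-e$ is not 2.5-connected for every $e\in E(H)$. *)

theory Defs
  imports Main
begin

text \<open>Finite loopless multigraphs: a vertex set, an edge set, and for each edge
  its set of (two distinct) endvertices. Parallel edges are allowed.\<close>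

record ('v, 'e) mgraph =
  verts :: "'v set"
  edges :: "'e set"
  ends  :: "'e \<Rightarrow> 'v set"

definition mgraph :: "('v, 'e) mgraph \<Rightarrow> bool" where
  "mgraph G \<longleftrightarrow> finite (verts G) \<and> finite (edges G) \<and>
     (\<forall>e \<in> edges G. ends G e \<subseteq> verts G \<and> card (ends G e) = 2)"

definition adj :: "('v, 'e) mgraph \<Rightarrow> 'v \<Rightarrow> 'v \<Rightarrow> bool" where
  "adj G u v \<longleftrightarrow> (\<exists>e \<in> edges G. ends G e = {u, v})"

definition del_edges :: "('v, 'e) mgraph \<Rightarrow> 'e set \<Rightarrow> ('v, 'e) mgraph" where
  "del_edges G F = G\<lparr>edges := edges G - F\<rparr>"

definition del_vert :: "('v, 'e) mgraph \<Rightarrow> 'v \<Rightarrow> ('v, 'e) mgraph" where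
  "del_vert G c = G\<lparr>verts := verts G - {c}, edges := {e \<in> edges G. c \<notin> ends G e}\<rparr>"

definition del_verts :: "('v, 'e) mgraph \<Rightarrow> 'v set \<Rightarrow> ('v, 'e) mgraph" where
  "del_verts G S = G\<lparr>verts := verts G - S, edges := {e \<in> edges G. ends G e \<inter> S = {}}\<rparr>"

definition connected :: "('v, 'e) mgraph \<Rightarrow> bool" where
  "connected G \<longleftrightarrow> verts G \<noteq> {} \<and> (\<forall>u \<in> verts G. \<forall>v \<in> verts G. (adj G)\<^sup>*\<^sup>* u v)"

definition comp_of :: "('v, 'e) mgraph \<Rightarrow> 'v \<Rightarrow> 'v set" where
  "comp_of G v = {w \<in> verts G. (adj G)\<^sup>*\<^sup>* v w}"

definition components :: "('v, 'e) mgraph \<Rightarrow> 'v set set" where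
  "components G = comp_of G ` verts G"

definition biconnected :: "('v, 'e) mgraph \<Rightarrow> bool" where
  "biconnected G \<longleftrightarrow> connected G \<and>
     (\<forall>u \<in> verts G. \<forall>v \<in> verts G. \<forall>w \<in> verts G.
        u \<noteq> v \<and> u \<noteq> w \<and> v \<noteq> w \<longrightarrow> (adj (del_vert G w))\<^sup>*\<^sup>* u v)"

definition three_connected :: "('v, 'e) mgraph \<Rightarrow> bool" where
  "three_connected G \<longleftrightarrow> card (verts G) > 3 \<and>
     (\<forall>S \<subseteq> verts G. card S \<le> 2 \<longrightarrow> connected (del_verts G S))"

definition triangle :: "('v, 'e) mgraph \<Rightarrow> bool" where
  "triangle G \<longleftrightarrow> card (verts G) = 3 \<and> card (edges G) = 3 \<and>
     (\<forall>u \<in> verts G. \<forall>v \<in> verts G. u \<noteq> v \<longrightarrow> card {e \<in> edges G. ends G e = {u, v}} = 1)"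

definition two_half_connected :: "('v, 'e) mgraph \<Rightarrow> bool" where
  "two_half_connected H \<longleftrightarrow> biconnected H \<and> \<not> triangle H \<and>
     \<not> (\<exists>c \<in> verts H. \<exists>e \<in> edges H. \<not> connected (del_vert (del_edges H {e}) c))"

definition v2e_separator :: "('v, 'e) mgraph \<Rightarrow> 'v \<Rightarrow> 'e \<Rightarrow> 'e \<Rightarrow> bool" where
  "v2e_separator H c e1 e2 \<longleftrightarrow> c \<in> verts H \<and> e1 \<in> edges H \<and> e2 \<in> edges H \<and>
     \<not> connected (del_vert (del_edges H {e1, e2}) c)"

definition degenerate :: "('v, 'e) mgraph \<Rightarrow> 'v \<Rightarrow> 'e \<Rightarrow> 'e \<Rightarrow> bool" where
  "degenerate H c e1 e2 \<longleftrightarrow> (\<exists>u \<in> verts H. \<exists>e0 \<in> edges H.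
     card {e0, e1, e2} = 3 \<and> {e \<in> edges H. u \<in> ends H e} = {e0, e1, e2} \<and> ends H e0 = {u, c})"

definition critical_two_half_connected :: "('v, 'e) mgraph \<Rightarrow> bool" where
  "critical_two_half_connected H \<longleftrightarrow> two_half_connected H \<and>
     (\<forall>e \<in> edges H. \<not> two_half_connected (del_edges H {e}))"

text \<open>Gluing: take the induced subgraph on S (embedded via Some), add a new vertex None,
  and for each list entry T (a singleton set {t} in the intended use) a new edge between
  None and t.\<close>

definition glue :: "('v, 'e) mgraph \<Rightarrow> 'v set \<Rightarrow> 'v set list \<Rightarrow> ('v option, 'e + nat) mgraph" where
  "glue G S ts = \<lparr> verts = insert None (Some ` S),
     edges = Inl ` {e \<in> edges G. ends G e \<subseteq> S} \<union> Inr ` {0..<length ts},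
     ends = (\<lambda>x. case x of Inl e \<Rightarrow> Some ` ends G e
                        | Inr i \<Rightarrow> insert None (Some ` (ts ! i))) \<rparr>"

definition good_piece :: "('w, 'f) mgraph \<Rightarrow> ('v, 'e) mgraph \<Rightarrow> bool" where
  "good_piece G' G \<longleftrightarrow> critical_two_half_connected G' \<and> three_connected G' \<and>
     card (verts G') < card (verts G)"

end

theory Submission
  imports Defs
begin

(* Both pieces arise from one construction: a side X of the cut is contracted to a new vertex
   joined to three terminals on the other side S (the S-ends of the cut edges; in case (b) the
   two S-ends of e1, e2 and c).  A separator of at most two vertices of the piece pulls back to
   one of G if it avoids the new vertex; otherwise it cuts off a part of G[S] containing at most
   one terminal, and adding that terminal to it gives a small separator of G.  For
   criticality, deleting the edge from the new vertex to a terminal leaves the separator formed by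
   a second terminal and the edge to the third.  Deleting an edge f of G[S], criticality of G
   provides a separator (w, f, g) of G, which transfers to the piece: w becomes the new vertex if
   it lies in X, and g is replaced by the edge to the only terminal on the far side if g leaves S.
   Non-degeneracy of (c, e1, e2), criticality and, in case (b), the absence of an edge cut through
   c make the terminals distinct and give each of them two neighbours in S. *)

subsection \<open>Multigraphs\<close>

lemma card_le_two: "card {x, y} \<le> 2"
  by (simp add: card_insert_if)

lemma mgraph_ends_subset: "mgraph G \<Longrightarrow> e \<in> edges G \<Longrightarrow> ends G e \<subseteq> verts G"
  unfolding mgraph_def by blast

lemma mgraph_card_ends: "mgraph G \<Longrightarrow> e \<in> edges G \<Longrightarrow> card (ends G e) = 2"
  unfolding mgraph_def by blast

lemma mgraph_finite_ends: "mgraph G \<Longrightarrow> e \<in> edges G \<Longrightarrow> finite (ends G e)"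
  using mgraph_card_ends[of G e] by (intro card_ge_0_finite) simp

lemma mgraph_ends_doubleton: "mgraph G \<Longrightarrow> e \<in> edges G \<Longrightarrow> \<exists>x y. x \<noteq> y \<and> ends G e = {x, y}"
  using mgraph_card_ends card_2_iff by metis

lemma mgraph_ends_eq:
  assumes "mgraph G" "e \<in> edges G" "x \<in> ends G e" "y \<in> ends G e" "x \<noteq> y"
  shows "ends G e = {x, y}"
proof -
  have "{x, y} \<subseteq> ends G e" "card {x, y} = card (ends G e)"
    using assms mgraph_card_ends[OF assms(1,2)] by simp_all
  then show ?thesis using card_subset_eq mgraph_finite_ends[OF assms(1,2)] by metis
qed

lemma mgraph_ends_not_singleton: "mgraph G \<Longrightarrow> e \<in> edges G \<Longrightarrow> \<not> ends G e \<subseteq> {v}"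
  using card_mono[of "{v}" "ends G e"] mgraph_card_ends[of G e] by auto

lemma mgraph_other_end:
  assumes "mgraph G" "e \<in> edges G" "x \<in> ends G e"
  obtains y where "y \<noteq> x" "ends G e = {x, y}"
proof -
  obtain y where "y \<in> ends G e" "y \<noteq> x" using mgraph_ends_not_singleton[OF assms(1,2), of x] by blast
  then show ?thesis using that mgraph_ends_eq[OF assms] by blast
qed

lemma verts_del_edges [simp]: "verts (del_edges G F) = verts G"
  and edges_del_edges [simp]: "edges (del_edges G F) = edges G - F"
  and ends_del_edges [simp]: "ends (del_edges G F) = ends G"
  unfolding del_edges_def by simp_all

lemma verts_del_verts [simp]: "verts (del_verts G W) = verts G - W"
  and edges_del_verts [simp]: "edges (del_verts G W) = {e \<in> edges G. ends G e \<inter> W = {}}"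
  and ends_del_verts [simp]: "ends (del_verts G W) = ends G"
  unfolding del_verts_def by simp_all

lemma verts_del_vert [simp]: "verts (del_vert G c) = verts G - {c}"
  unfolding del_vert_def by simp

lemma del_vert_eq_del_verts: "del_vert G c = del_verts G {c}"
  unfolding del_vert_def del_verts_def by auto

lemma del_verts_empty [simp]: "del_verts G {} = G"
  unfolding del_verts_def by simp

lemma del_edges_empty [simp]: "del_edges G {} = G"
  unfolding del_edges_def by simp

lemma del_edges_del_edges: "del_edges (del_edges G F) F' = del_edges G (F \<union> F')"
proof -
  have "edges G - F - F' = edges G - (F \<union> F')" by blast
  then show ?thesis unfolding del_edges_def by simp
qed

subsection \<open>Separations\<close>

definition crossing_edges :: "('v, 'e) mgraph \<Rightarrow> 'v set \<Rightarrow> 'v set \<Rightarrow> 'v set \<Rightarrow> 'e set" where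
  "crossing_edges G W A B =
     {e \<in> edges G. ends G e \<inter> W = {} \<and> \<not> ends G e \<subseteq> A \<and> \<not> ends G e \<subseteq> B}"

definition separation :: "('v, 'e) mgraph \<Rightarrow> 'v set \<Rightarrow> 'e set \<Rightarrow> 'v set \<Rightarrow> 'v set \<Rightarrow> bool" where
  "separation G W F A B \<longleftrightarrow> A \<inter> B = {} \<and> A \<union> B = verts G - W \<and> A \<noteq> {} \<and> B \<noteq> {} \<and>
     crossing_edges G W A B \<subseteq> F"

lemma separationI:
  assumes "A \<inter> B = {}" "A \<union> B = verts G - W" "A \<noteq> {}" "B \<noteq> {}"
    and "\<And>e. e \<in> edges G \<Longrightarrow> e \<notin> F \<Longrightarrow> ends G e \<inter> W = {} \<Longrightarrow> ends G e \<subseteq> A \<or> ends G e \<subseteq> B"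
  shows "separation G W F A B"
  using assms unfolding separation_def crossing_edges_def by blast

lemma separationD:
  assumes "separation G W F A B"
  shows "A \<inter> B = {}" "A \<union> B = verts G - W" "A \<noteq> {}" "B \<noteq> {}"
    and "\<And>e. e \<in> edges G \<Longrightarrow> e \<notin> F \<Longrightarrow> ends G e \<inter> W = {} \<Longrightarrow> ends G e \<subseteq> A \<or> ends G e \<subseteq> B"
  using assms unfolding separation_def crossing_edges_def by blast+

lemma separation_sym: "separation G W F A B \<Longrightarrow> separation G W F B A"
  unfolding separation_def crossing_edges_def by blast

lemma separation_mono: "separation G W F A B \<Longrightarrow> F \<subseteq> F' \<Longrightarrow> separation G W F' A B"
  unfolding separation_def by blast

lemma separation_insert_edge:
  "separation G W (insert f F) A B \<Longrightarrow> separation G W F A B \<or> f \<in> crossing_edges G W A B"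
  unfolding separation_def by blast

lemma separation_delete_vertices:
  assumes "separation G W F A B" "A - R \<noteq> {}" "B - R \<noteq> {}"
    and "\<And>e. e \<in> edges G \<Longrightarrow> e \<in> F - F' \<Longrightarrow> ends G e \<inter> (W \<union> R) \<noteq> {}"
  shows "separation G (W \<union> R) F' (A - R) (B - R)"
proof (rule separationI)
  fix e assume e: "e \<in> edges G" "e \<notin> F'" "ends G e \<inter> (W \<union> R) = {}"
  then have "e \<notin> F" using assms(4) by blast
  then have "ends G e \<subseteq> A \<or> ends G e \<subseteq> B" using separationD(5)[OF assms(1) e(1)] e(3) by blast
  then show "ends G e \<subseteq> A - R \<or> ends G e \<subseteq> B - R" using e(3) by blast
qed (use separationD[OF assms(1)] assms(2,3) in auto)

lemma mgraph_crossing_edge_ends: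
  assumes "mgraph G" "e \<in> crossing_edges G W A B" "A \<union> B = verts G - W"
  shows "\<exists>a b. a \<in> A \<and> b \<in> B \<and> ends G e = {a, b}"
proof -
  have e: "e \<in> edges G" "ends G e \<inter> W = {}" "\<not> ends G e \<subseteq> A" "\<not> ends G e \<subseteq> B"
    using assms(2) unfolding crossing_edges_def by auto
  obtain x y where xy: "ends G e = {x, y}" using mgraph_ends_doubleton[OF assms(1) e(1)] by blast
  have "x \<in> A \<union> B" "y \<in> A \<union> B"
    using mgraph_ends_subset[OF assms(1) e(1)] e(2) assms(3) xy by auto
  then show ?thesis
    using e(3,4) xy by (cases "x \<in> A") (auto simp: insert_commute)
qed

lemma separation_reachable_side:
  assumes "(adj (del_verts (del_edges G F) W))\<^sup>*\<^sup>* x y" "x \<in> A" "separation G W F A B"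
  shows "y \<in> A"
  using assms(1)
proof (induction rule: rtranclp_induct)
  case base then show ?case using assms(2) by simp
next
  case (step y z)
  from step.hyps(2) obtain e where e: "e \<in> edges G" "e \<notin> F" "ends G e \<inter> W = {}" "ends G e = {y, z}"
    unfolding adj_def by auto
  have "ends G e \<subseteq> A \<or> ends G e \<subseteq> B" by (rule separationD(5)[OF assms(3) e(1-3)])
  then show ?case using separationD(1)[OF assms(3)] step.IH e(4) by blast
qed

lemma connected_del_iff:
  assumes "mgraph G"
  shows "connected (del_verts (del_edges G F) W) \<longleftrightarrow>
    verts G - W \<noteq> {} \<and> (\<nexists>A B. separation G W F A B)"
    (is "connected ?H \<longleftrightarrow> _")
proof
  assume c: "connected ?H"
  have "False" if s: "separation G W F A B" for A B
  proof -
    obtain a b where ab: "a \<in> A" "b \<in> B" using separationD(3,4)[OF s] by blast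
    then have "(adj ?H)\<^sup>*\<^sup>* a b" using c separationD(2)[OF s] unfolding connected_def by auto
    then show False using separation_reachable_side[OF _ ab(1) s] ab(2) separationD(1)[OF s] by blast
  qed
  then show "verts G - W \<noteq> {} \<and> (\<nexists>A B. separation G W F A B)"
    using c unfolding connected_def by auto
next
  assume h: "verts G - W \<noteq> {} \<and> (\<nexists>A B. separation G W F A B)"
  have "(adj ?H)\<^sup>*\<^sup>* u v" if u: "u \<in> verts G - W" and v: "v \<in> verts G - W" for u v
  proof (rule ccontr)
    assume nv: "\<not> (adj ?H)\<^sup>*\<^sup>* u v"
    define A where "A = {y \<in> verts G - W. (adj ?H)\<^sup>*\<^sup>* u y}"
    have "separation G W F A (verts G - W - A)"
    proof (rule separationI)
      fix e assume e: "e \<in> edges G" "e \<notin> F" "ends G e \<inter> W = {}"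
      obtain x y where xy: "ends G e = {x, y}" using mgraph_ends_doubleton[OF assms e(1)] by blast
      have "adj ?H x y" "adj ?H y x" unfolding adj_def using e xy by auto
      moreover have "x \<in> verts G - W" "y \<in> verts G - W"
        using xy e(3) mgraph_ends_subset[OF assms e(1)] by auto
      ultimately have "x \<in> A \<longleftrightarrow> y \<in> A"
        unfolding A_def using rtranclp.rtrancl_into_rtrancl[of "adj ?H" u] by blast
      then show "ends G e \<subseteq> A \<or> ends G e \<subseteq> verts G - W - A"
        using xy \<open>x \<in> verts G - W\<close> \<open>y \<in> verts G - W\<close> by auto
    next
      show "A \<noteq> {}" using u unfolding A_def by auto
      show "verts G - W - A \<noteq> {}" using v nv unfolding A_def by auto
    qed (auto simp: A_def)
    with h show False by blast
  qed
  then show "connected ?H" using h unfolding connected_def by simp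
qed

lemma connected_del_vert_iff:
  "mgraph G \<Longrightarrow> connected (del_vert (del_edges G F) c) \<longleftrightarrow>
    verts G - {c} \<noteq> {} \<and> (\<nexists>A B. separation G {c} F A B)"
  using connected_del_iff del_vert_eq_del_verts by metis

lemma connected_del_edges_iff:
  "mgraph G \<Longrightarrow> connected (del_edges G F) \<longleftrightarrow> verts G \<noteq> {} \<and> (\<nexists>A B. separation G {} F A B)"
  using connected_del_iff[of G F "{}"] by simp

definition minimal_cut :: "('v, 'e) mgraph \<Rightarrow> 'v set \<Rightarrow> 'e set \<Rightarrow> bool" where
  "minimal_cut G W F \<longleftrightarrow> (\<forall>f \<in> F. \<forall>A B. \<not> separation G W (F - {f}) A B)"

lemma minimal_cut_crossing:
  assumes "mgraph G" "minimal_cut G W F" "f \<in> F" "separation G W F A B"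
  shows "f \<in> edges G" "ends G f \<inter> W = {}" "\<exists>a b. a \<in> A \<and> b \<in> B \<and> ends G f = {a, b}"
proof -
  have "separation G W (insert f (F - {f})) A B" using assms(3,4) by (simp add: insert_absorb)
  then have "separation G W (F - {f}) A B \<or> f \<in> crossing_edges G W A B"
    by (rule separation_insert_edge)
  then have f: "f \<in> crossing_edges G W A B" using assms(2,3) unfolding minimal_cut_def by blast
  then show "f \<in> edges G" "ends G f \<inter> W = {}" unfolding crossing_edges_def by auto
  show "\<exists>a b. a \<in> A \<and> b \<in> B \<and> ends G f = {a, b}"
    using mgraph_crossing_edge_ends[OF assms(1) f separationD(2)[OF assms(4)]] .
qed

text \<open>An edge of a minimal cut has an end in each side of every separation, so a side
  splitting into two closed parts would give it three distinct ends.\<close>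

lemma minimal_cut_side_unsplittable:
  assumes "mgraph G" "minimal_cut G W F" "F \<noteq> {}" "separation G W F A B"
    and P: "P \<subseteq> A" "P \<noteq> {}" "P \<noteq> A"
    and closed: "\<And>e. e \<in> edges G \<Longrightarrow> e \<notin> F \<Longrightarrow> ends G e \<inter> W = {} \<Longrightarrow>
      ends G e \<subseteq> P \<or> ends G e \<inter> P = {}"
  shows False
proof -
  obtain f where f: "f \<in> F" using assms(3) by blast
  note AB = separationD[OF assms(4)]
  have "separation G W F P (A - P \<union> B)"
  proof (rule separationI)
    fix e assume "e \<in> edges G" "e \<notin> F" "ends G e \<inter> W = {}"
    then show "ends G e \<subseteq> P \<or> ends G e \<subseteq> A - P \<union> B"
      using closed mgraph_ends_subset[OF assms(1)] AB(2) by blast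
  qed (use AB(1-4) P in auto)
  then obtain p where p: "p \<in> ends G f" "p \<in> P" using minimal_cut_crossing(3)[OF assms(1,2) f] by blast
  have "separation G W F (A - P) (P \<union> B)"
  proof (rule separationI)
    fix e assume e: "e \<in> edges G" "e \<notin> F" "ends G e \<inter> W = {}"
    then show "ends G e \<subseteq> A - P \<or> ends G e \<subseteq> P \<union> B"
      using closed[OF e] AB(5)[OF e] by blast
  qed (use AB(1-4) P in auto)
  then obtain q where q: "q \<in> ends G f" "q \<in> A - P" using minimal_cut_crossing(3)[OF assms(1,2) f] by blast
  obtain b where b: "b \<in> ends G f" "b \<in> B"
    using minimal_cut_crossing(3)[OF assms(1,2) f assms(4)] by blast
  have fE: "f \<in> edges G" using minimal_cut_crossing(1)[OF assms(1,2) f assms(4)] .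
  have "p \<noteq> q" "p \<noteq> b" "q \<noteq> b" using p q b AB(1) P(1) by blast+
  then have "card {p, q, b} = 3" by simp
  moreover have "card {p, q, b} \<le> card (ends G f)"
    using p q b by (intro card_mono mgraph_finite_ends[OF assms(1) fE]) simp
  ultimately show False using mgraph_card_ends[OF assms(1) fE] by simp
qed

lemma minimal_cut_comp_of:
  assumes "mgraph G" "minimal_cut G W F" "F \<noteq> {}" "separation G W F A B" "v \<in> A"
  shows "comp_of (del_verts (del_edges G F) W) v = A"
    (is "comp_of ?H v = A")
proof (rule ccontr)
  assume ne: "comp_of ?H v \<noteq> A"
  have sub: "comp_of ?H v \<subseteq> A"
    unfolding comp_of_def using separation_reachable_side[OF _ assms(5,4)] by blast
  have v: "v \<in> comp_of ?H v" using assms(5) separationD(2)[OF assms(4)] unfolding comp_of_def by auto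
  have closed: "ends G e \<subseteq> comp_of ?H v \<or> ends G e \<inter> comp_of ?H v = {}"
    if e: "e \<in> edges G" "e \<notin> F" "ends G e \<inter> W = {}" for e
  proof -
    obtain x y where xy: "ends G e = {x, y}" using mgraph_ends_doubleton[OF assms(1) e(1)] by blast
    have "adj ?H x y" "adj ?H y x" unfolding adj_def using e xy by auto
    moreover have "x \<in> verts G - W" "y \<in> verts G - W"
      using xy e(3) mgraph_ends_subset[OF assms(1) e(1)] by auto
    ultimately have "x \<in> comp_of ?H v \<longleftrightarrow> y \<in> comp_of ?H v"
      unfolding comp_of_def by (auto intro: rtranclp.rtrancl_into_rtrancl)
    then show ?thesis unfolding xy by blast
  qed
  show False using minimal_cut_side_unsplittable[OF assms(1-4) sub _ ne closed] v by blast
qed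

lemma minimal_cut_components:
  assumes "mgraph G" "minimal_cut G W F" "F \<noteq> {}" "separation G W F A B"
  shows "components (del_verts (del_edges G F) W) = {A, B}"
proof -
  let ?c = "comp_of (del_verts (del_edges G F) W)"
  note AB = separationD[OF assms(4)]
  have cA: "?c v = A" if "v \<in> A" for v using minimal_cut_comp_of[OF assms that] .
  have cB: "?c v = B" if "v \<in> B" for v
    using minimal_cut_comp_of[OF assms(1-3) separation_sym[OF assms(4)] that] .
  have "?c ` (A \<union> B) = {A, B}"
  proof
    show "?c ` (A \<union> B) \<subseteq> {A, B}" using cA cB by blast
    have "A \<in> ?c ` (A \<union> B)" using AB(3) cA by (metis Un_iff all_not_in_conv image_eqI)
    moreover have "B \<in> ?c ` (A \<union> B)" using AB(4) cB by (metis Un_iff all_not_in_conv image_eqI)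
    ultimately show "{A, B} \<subseteq> ?c ` (A \<union> B)" by blast
  qed
  then show ?thesis unfolding components_def using AB(2) by simp
qed

lemma minimal_cut_separation_components:
  assumes "mgraph G" "minimal_cut G W F" "F \<noteq> {}"
    and "components (del_verts (del_edges G F) W) = {C1, C2}" "C1 \<noteq> C2"
  shows "separation G W F C1 C2"
proof -
  let ?H = "del_verts (del_edges G F) W"
  have "verts G - W \<noteq> {}" using assms(4) unfolding components_def by auto
  moreover have "\<not> connected ?H"
  proof
    assume "connected ?H"
    then have "comp_of ?H v = verts ?H" if "v \<in> verts ?H" for v
      using that unfolding connected_def comp_of_def by auto
    then have "components ?H \<subseteq> {verts ?H}" unfolding components_def by auto
    then show False using assms(4,5) by auto
  qed
  ultimately obtain A B where s: "separation G W F A B" using connected_del_iff[OF assms(1)] by blast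
  then have "{C1, C2} = {A, B}" using minimal_cut_components[OF assms(1-3)] assms(4) by simp
  then consider "C1 = A" "C2 = B" | "C1 = B" "C2 = A" using assms(5) by (metis doubleton_eq_iff)
  then show ?thesis using s separation_sym by metis
qed

definition connected_set :: "('v, 'e) mgraph \<Rightarrow> 'v set \<Rightarrow> bool" where
  "connected_set G X \<longleftrightarrow> (\<forall>P. P \<subseteq> X \<and> P \<noteq> {} \<and> P \<noteq> X \<longrightarrow>
     (\<exists>e\<in>edges G. ends G e \<subseteq> X \<and> ends G e \<inter> P \<noteq> {} \<and> ends G e \<inter> (X - P) \<noteq> {}))"

lemma minimal_cut_connected_set:
  assumes "mgraph G" "minimal_cut G W F" "F \<noteq> {}" "separation G W F A B"
  shows "connected_set G A"
  unfolding connected_set_def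
proof (intro allI impI)
  fix P assume P: "P \<subseteq> A \<and> P \<noteq> {} \<and> P \<noteq> A"
  show "\<exists>e\<in>edges G. ends G e \<subseteq> A \<and> ends G e \<inter> P \<noteq> {} \<and> ends G e \<inter> (A - P) \<noteq> {}"
  proof (rule ccontr)
    assume none: "\<not> ?thesis"
    have closed: "ends G e \<subseteq> P \<or> ends G e \<inter> P = {}"
      if "e \<in> edges G" "e \<notin> F" "ends G e \<inter> W = {}" for e
    proof (cases "ends G e \<subseteq> A")
      case True
      then show ?thesis using none that(1) by blast
    next
      case False
      then have "ends G e \<subseteq> B" using separationD(5)[OF assms(4) that] by blast
      then show ?thesis using separationD(1)[OF assms(4)] P by blast
    qed
    show False using minimal_cut_side_unsplittable[OF assms _ _ _ closed] P by blast
  qed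
qed

subsection \<open>Three-connected graphs\<close>

lemma three_connected_no_small_cut:
  assumes "mgraph G" "three_connected G" "finite W" "card W \<le> 2"
  shows "\<not> separation G W {} A B"
proof
  assume s: "separation G W {} A B"
  have "separation G (W \<inter> verts G) {} A B"
  proof (rule separationI)
    fix e assume e: "e \<in> edges G" "e \<notin> {}" "ends G e \<inter> (W \<inter> verts G) = {}"
    then have "ends G e \<inter> W = {}" using mgraph_ends_subset[OF assms(1) e(1)] by blast
    then show "ends G e \<subseteq> A \<or> ends G e \<subseteq> B" using separationD(5)[OF s e(1,2)] by blast
  qed (use separationD(1-4)[OF s] in auto)
  moreover have "connected (del_verts (del_edges G {}) (W \<inter> verts G))"
  proof -
    have "card (W \<inter> verts G) \<le> 2" using assms(3,4) by (meson card_mono inf_le1 le_trans)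
    then show ?thesis using assms(2) unfolding three_connected_def by simp
  qed
  ultimately show False using connected_del_iff[OF assms(1)] by blast
qed

lemma three_connected_small_side:
  assumes "mgraph G" "three_connected G" "separation G W F A B" "finite (W \<union> R)" "card (W \<union> R) \<le> 2"
    and "\<And>e. e \<in> edges G \<Longrightarrow> e \<in> F \<Longrightarrow> ends G e \<inter> (W \<union> R) \<noteq> {}"
  shows "A \<subseteq> R \<or> B \<subseteq> R"
proof (rule ccontr)
  assume "\<not> ?thesis"
  then have "separation G (W \<union> R) {} (A - R) (B - R)"
    by (intro separation_delete_vertices[OF assms(3)]) (use assms(6) in auto)
  then show False using three_connected_no_small_cut[OF assms(1,2,4,5)] by blast
qed

lemma three_connected_three_neighbours:
  assumes "mgraph G" "three_connected G" "v \<in> verts G" "v \<noteq> x" "v \<noteq> y"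
    and "\<And>e. e \<in> edges G \<Longrightarrow> v \<in> ends G e \<Longrightarrow> ends G e \<subseteq> {v, x, y}"
  shows False
proof -
  have "card {v, x, y} \<le> 3" by (simp add: card_insert_if)
  moreover have "card (verts G) > 3" using assms(2) unfolding three_connected_def by blast
  ultimately have "\<not> verts G \<subseteq> {v, x, y}" using card_mono[of "{v, x, y}" "verts G"] by auto
  then have "separation G {x, y} {} {v} (verts G - {x, y} - {v})"
  proof (intro separationI)
    fix e assume e: "e \<in> edges G" "e \<notin> {}" "ends G e \<inter> {x, y} = {}"
    show "ends G e \<subseteq> {v} \<or> ends G e \<subseteq> verts G - {x, y} - {v}"
    proof (cases "v \<in> ends G e")
      case True
      then show ?thesis using assms(6)[OF e(1)] e(3) mgraph_ends_not_singleton[OF assms(1) e(1)] by blast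
    next
      case False
      then show ?thesis using e(3) mgraph_ends_subset[OF assms(1) e(1)] by blast
    qed
  qed (use assms(3-5) in auto)
  then show False using three_connected_no_small_cut[OF assms(1,2) _ card_le_two] by blast
qed

lemma three_connected_no_vertex_edge_cut:
  assumes "mgraph G" "three_connected G"
  shows "\<not> separation G {w} {g} A B"
proof
  assume s: "separation G {w} {g} A B"
  have "\<not> separation G {w} {} A B" using three_connected_no_small_cut[OF assms] by simp
  then have "g \<in> crossing_edges G {w} A B" using separation_insert_edge[OF s] by blast
  then obtain a b where ab: "a \<in> A" "b \<in> B" "ends G g = {a, b}"
    using mgraph_crossing_edge_ends[OF assms(1) _ separationD(2)[OF s]] by blast
  have "A \<subseteq> {b} \<or> B \<subseteq> {b}"
    by (rule three_connected_small_side[OF assms s]) (use ab in \<open>auto simp: card_insert_if\<close>)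
  then have Bb: "B \<subseteq> {b}" using ab(1,2) separationD(1)[OF s] by blast
  have "B \<subseteq> {a} \<or> A \<subseteq> {a}"
    by (rule three_connected_small_side[OF assms separation_sym[OF s]])
      (use ab in \<open>auto simp: card_insert_if\<close>)
  then have "A \<subseteq> {a}" using ab(1,2) separationD(1)[OF s] by blast
  then have "verts G \<subseteq> {w, a, b}" using Bb separationD(2)[OF s] by blast
  then have "card (verts G) \<le> card {w, a, b}" by (intro card_mono) auto
  also have "\<dots> \<le> 3" by (simp add: card_insert_if)
  finally show False using assms(2) unfolding three_connected_def by simp
qed

lemma three_connected_no_two_edge_cut:
  assumes "mgraph G" "three_connected G"
  shows "\<not> separation G {} {g, h} A B"
proof
  have crossing: False
    if s: "separation G {} {g, h} A B" and g: "g \<in> crossing_edges G {} A B" for g h A B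
  proof -
    obtain a b where ab: "a \<in> A" "b \<in> B" "ends G g = {a, b}"
      using mgraph_crossing_edge_ends[OF assms(1) g separationD(2)[OF s]] by blast
    show False
    proof (cases "A = {a}")
      case True
      have "b \<noteq> a" using ab separationD(1)[OF s] by blast
      obtain y where y: "y \<noteq> a" "h \<in> edges G \<Longrightarrow> a \<in> ends G h \<Longrightarrow> ends G h = {a, y}"
      proof (cases "h \<in> edges G \<and> a \<in> ends G h")
        case True
        then show ?thesis using that mgraph_other_end[OF assms(1)] by metis
      qed (use that \<open>b \<noteq> a\<close> in blast)
      have nbrs: "ends G e \<subseteq> {a, b, y}" if e: "e \<in> edges G" "a \<in> ends G e" for e
      proof -
        have "e = g \<or> e = h"
        proof (rule ccontr)
          assume "\<not> ?thesis"
          then have "ends G e \<subseteq> A \<or> ends G e \<subseteq> B" using separationD(5)[OF s e(1)] by blast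
          then show False
            using True e mgraph_ends_not_singleton[OF assms(1) e(1)] ab(1) separationD(1)[OF s] by blast
        qed
        then show ?thesis using ab(3) y e by blast
      qed
      have "a \<in> verts G" using ab(1) separationD(2)[OF s] by blast
      then show False
        using three_connected_three_neighbours[OF assms _ _ _ nbrs] \<open>b \<noteq> a\<close> y(1) by blast
    next
      case False
      then have "separation G ({} \<union> {a}) {h} (A - {a}) (B - {a})"
        using ab separationD(1)[OF s] by (intro separation_delete_vertices[OF s]) auto
      moreover have "B - {a} = B" using ab separationD(1)[OF s] by blast
      ultimately show False using three_connected_no_vertex_edge_cut[OF assms] by simp
    qed
  qed
  assume s: "separation G {} {g, h} A B"
  show False
  proof (cases "g \<in> crossing_edges G {} A B \<or> h \<in> crossing_edges G {} A B")
    case True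
    then show False using crossing[OF s] crossing[of h g] s by (metis insert_commute)
  next
    case False
    then have "separation G {} {} A B" using s separation_insert_edge by metis
    then show False using three_connected_no_small_cut[OF assms] by simp
  qed
qed

lemma three_connected_two_half_connected:
  assumes "mgraph G" "three_connected G"
  shows "two_half_connected G"
proof -
  have c3: "card (verts G) > 3" using assms(2) unfolding three_connected_def by blast
  have nonempty: "verts G - {c} \<noteq> {}" for c
    using c3 card_mono[of "{c}" "verts G"] by fastforce
  have "connected G"
    using connected_del_edges_iff[OF assms(1), of "{}"] three_connected_no_small_cut[OF assms, of "{}"]
      nonempty by auto
  moreover have "(adj (del_vert G w))\<^sup>*\<^sup>* u v"
    if "u \<in> verts G" "v \<in> verts G" "u \<noteq> w" "v \<noteq> w" for u v w
  proof -
    have "connected (del_vert (del_edges G {}) w)"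
      using connected_del_vert_iff[OF assms(1), of "{}" w] three_connected_no_small_cut[OF assms, of "{w}"]
        nonempty by auto
    then show ?thesis using that unfolding connected_def by simp
  qed
  moreover have "connected (del_vert (del_edges G {e}) c)" for c e
    using connected_del_vert_iff[OF assms(1)] three_connected_no_vertex_edge_cut[OF assms] nonempty
    by blast
  moreover have "\<not> triangle G" unfolding triangle_def using c3 by simp
  ultimately show ?thesis unfolding two_half_connected_def biconnected_def by blast
qed

lemma critical_edge_cut:
  assumes "mgraph G" "three_connected G" "f \<in> edges G" "\<not> two_half_connected (del_edges G {f})"
  obtains w g A B where "w \<in> verts G" "g \<in> edges G" "g \<noteq> f" "separation G {w} {f, g} A B"
proof -
  let ?H = "del_edges G {f}"
  have c3: "card (verts G) > 3" using assms(2) unfolding three_connected_def by blast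
  have nonempty: "verts G - {c} \<noteq> {}" for c
    using c3 card_mono[of "{c}" "verts G"] by fastforce
  have "connected ?H"
    using connected_del_edges_iff[OF assms(1), of "{f}"] three_connected_no_two_edge_cut[OF assms(1,2), of f f]
      nonempty by auto
  moreover have "(adj (del_vert ?H w))\<^sup>*\<^sup>* u v"
    if "u \<in> verts G" "v \<in> verts G" "u \<noteq> w" "v \<noteq> w" for u v w
  proof -
    have "connected (del_vert ?H w)"
      using connected_del_vert_iff[OF assms(1)] three_connected_no_vertex_edge_cut[OF assms(1,2)]
        nonempty by blast
    then show ?thesis using that unfolding connected_def by simp
  qed
  moreover have "\<not> triangle ?H" unfolding triangle_def using c3 by simp
  ultimately obtain c e where ce: "c \<in> verts G" "e \<in> edges G" "e \<noteq> f"
    "\<not> connected (del_vert (del_edges ?H {e}) c)"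
    using assms(4) unfolding two_half_connected_def biconnected_def by auto
  then have "\<not> connected (del_vert (del_edges G {f, e}) c)" by (simp add: del_edges_del_edges insert_commute)
  then obtain A B where "separation G {c} {f, e} A B" using connected_del_vert_iff[OF assms(1)] nonempty by blast
  then show ?thesis using that ce by blast
qed

lemma critical_no_parallel_edges:
  assumes "mgraph G" "three_connected G" "\<forall>f\<in>edges G. \<not> two_half_connected (del_edges G {f})"
    and "p \<in> edges G" "q \<in> edges G" "ends G p = ends G q"
  shows "p = q"
proof (rule ccontr)
  assume "p \<noteq> q"
  obtain w g A B where w: "w \<in> verts G" and g: "g \<in> edges G" "g \<noteq> p"
    and s: "separation G {w} {p, g} A B"
    using critical_edge_cut[OF assms(1,2,4)] assms(3,4) by metis
  have "p \<in> crossing_edges G {w} A B"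
    using separation_insert_edge[OF s] three_connected_no_vertex_edge_cut[OF assms(1,2)] by blast
  then obtain a b where ab: "a \<in> A" "b \<in> B" "ends G p = {a, b}"
    using mgraph_crossing_edge_ends[OF assms(1) _ separationD(2)[OF s]] by blast
  have "q = g"
  proof (rule ccontr)
    assume "q \<noteq> g"
    then have "ends G q \<subseteq> A \<or> ends G q \<subseteq> B"
      using separationD(5)[OF s assms(5)] \<open>p \<noteq> q\<close> \<open>p \<in> crossing_edges G {w} A B\<close> assms(6)
      unfolding crossing_edges_def by auto
    then show False using \<open>p \<in> crossing_edges G {w} A B\<close> assms(6) unfolding crossing_edges_def by auto
  qed
  have "A \<subseteq> {b} \<or> B \<subseteq> {b}"
    by (rule three_connected_small_side[OF assms(1,2) s])
      (use ab assms(6) \<open>q = g\<close> in \<open>auto simp: card_insert_if\<close>)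
  then have Bb: "B = {b}" using ab separationD(1)[OF s] by blast
  have nbrs: "ends G e \<subseteq> {b, a, w}" if e: "e \<in> edges G" "b \<in> ends G e" for e
  proof (cases "e = p \<or> e = g \<or> w \<in> ends G e")
    case True
    have "b \<noteq> w" using ab(2) separationD(2)[OF s] by blast
    then show ?thesis using True ab(3) assms(6) \<open>q = g\<close> mgraph_ends_eq[OF assms(1) e] by auto
  next
    case False
    then have "ends G e \<subseteq> A \<or> ends G e \<subseteq> B" using separationD(5)[OF s e(1)] by blast
    then show ?thesis
      using Bb e ab(2) separationD(1)[OF s] mgraph_ends_not_singleton[OF assms(1) e(1)] by blast
  qed
  have "b \<in> verts G" "b \<noteq> a" "b \<noteq> w" using ab separationD(1,2)[OF s] by blast+
  then show False using three_connected_three_neighbours[OF assms(1,2) _ _ _ nbrs] by blast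
qed

lemma not_two_half_connected_del_edge:
  assumes "mgraph K" "w \<in> verts K" "separation K {w} {f, g} A B" "edges K - {f} \<noteq> {}"
  shows "\<not> two_half_connected (del_edges K {f})"
proof -
  obtain g' where g': "g' \<in> edges K" "g' \<noteq> f" "separation K {w} {f, g'} A B"
  proof (cases "g \<in> edges K - {f}")
    case True
    then show ?thesis using that assms(3) by blast
  next
    case False
    have "crossing_edges K {w} A B \<subseteq> edges K" unfolding crossing_edges_def by blast
    then have "separation K {w} {f} A B"
      using assms(3) False unfolding separation_def by blast
    then show ?thesis using that assms(4) separation_mono by (metis Diff_iff ex_in_conv insert_iff subsetI)
  qed
  have "del_edges (del_edges K {f}) {g'} = del_edges K {f, g'}"
    by (simp add: del_edges_del_edges insert_commute)
  then have "\<not> connected (del_vert (del_edges (del_edges K {f}) {g'}) w)"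
    using connected_del_vert_iff[OF assms(1)] g'(3) by auto
  then show ?thesis using assms(2) g'(1,2) unfolding two_half_connected_def by auto
qed

lemma three_connected_edge_avoiding:
  assumes "mgraph G" "three_connected G" "t \<in> verts G" "z \<noteq> t" "v \<noteq> t"
    and "\<And>e. e \<in> edges G \<Longrightarrow> t \<in> ends G e \<Longrightarrow> ends G e \<subseteq> S \<or> ends G e = {t, v}"
  shows "\<exists>e \<in> edges G. t \<in> ends G e \<and> ends G e \<subseteq> S \<and> z \<notin> ends G e"
proof (rule ccontr)
  assume none: "\<not> ?thesis"
  have nbrs: "ends G e \<subseteq> {t, z, v}" if e: "e \<in> edges G" "t \<in> ends G e" for e
    using assms(6)[OF e] none e mgraph_ends_eq[OF assms(1) e] assms(4) by blast
  show False using three_connected_three_neighbours[OF assms(1-3) _ _ nbrs] assms(4,5) by blast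
qed

text \<open>Otherwise all neighbours of \<open>u\<close> would lie in \<open>{z, v}\<close>.\<close>

lemma three_connected_separation_edge_avoiding:
  assumes mg: "mgraph G" and tc: "three_connected G"
    and s: "separation G W F C1 C2" and u: "u \<in> C1" "z \<noteq> u" and v: "v \<in> C2"
    and only: "\<And>e. e \<in> F \<Longrightarrow> u \<in> ends G e \<Longrightarrow> ends G e = {u, v}"
  shows "\<exists>e \<in> edges G. u \<in> ends G e \<and> ends G e \<subseteq> W \<union> C1 \<and> z \<notin> ends G e"
proof -
  note S = separationD[OF s]
  have "ends G e \<subseteq> W \<union> C1 \<or> ends G e = {u, v}" if e: "e \<in> edges G" "u \<in> ends G e" for e
  proof (cases "ends G e \<subseteq> W \<union> C1")
    case False
    have "ends G e \<inter> W = {}"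
    proof (rule ccontr)
      assume "ends G e \<inter> W \<noteq> {}"
      then obtain w where "w \<in> W" "w \<in> ends G e" by blast
      moreover have "w \<noteq> u" using \<open>w \<in> W\<close> u(1) S(2) by blast
      ultimately have "ends G e = {u, w}" using mgraph_ends_eq[OF mg e] by blast
      then show False using False u(1) \<open>w \<in> W\<close> by auto
    qed
    moreover have "\<not> ends G e \<subseteq> C1" "\<not> ends G e \<subseteq> C2" using False e(2) u(1) S(1) by blast+
    ultimately have "e \<in> F" using S(5)[OF e(1)] by blast
    then show ?thesis using only e(2) by blast
  qed simp
  moreover have "u \<in> verts G" "v \<noteq> u" using u(1) v S(1,2) by blast+
  ultimately show ?thesis using three_connected_edge_avoiding[OF mg tc _ u(2)] by blast
qed

lemma three_connected_minimal_cut_edges: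
  assumes "mgraph G" "three_connected G"
  shows "minimal_cut G {} {e0, e1, e2}"
  unfolding minimal_cut_def
proof (intro ballI allI notI)
  fix f A B assume f: "f \<in> {e0, e1, e2}" and s: "separation G {} ({e0, e1, e2} - {f}) A B"
  have "{e0, e1, e2} - {f} \<subseteq> {e1, e2} \<or> {e0, e1, e2} - {f} \<subseteq> {e0, e2} \<or>
      {e0, e1, e2} - {f} \<subseteq> {e0, e1}" using f by auto
  then show False
  proof (elim disjE)
    assume "{e0, e1, e2} - {f} \<subseteq> {e1, e2}"
    then have "separation G {} {e1, e2} A B" by (rule separation_mono[OF s])
    then show False using three_connected_no_two_edge_cut[OF assms] by blast
  next
    assume "{e0, e1, e2} - {f} \<subseteq> {e0, e2}"
    then have "separation G {} {e0, e2} A B" by (rule separation_mono[OF s])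
    then show False using three_connected_no_two_edge_cut[OF assms] by blast
  next
    assume "{e0, e1, e2} - {f} \<subseteq> {e0, e1}"
    then have "separation G {} {e0, e1} A B" by (rule separation_mono[OF s])
    then show False using three_connected_no_two_edge_cut[OF assms] by blast
  qed
qed

lemma three_connected_minimal_cut_vertex_edges:
  assumes "mgraph G" "three_connected G"
  shows "minimal_cut G {w} {e1, e2}"
  unfolding minimal_cut_def
proof (intro ballI allI notI)
  fix f A B assume f: "f \<in> {e1, e2}" and s: "separation G {w} ({e1, e2} - {f}) A B"
  have "{e1, e2} - {f} \<subseteq> {e2} \<or> {e1, e2} - {f} \<subseteq> {e1}" using f by auto
  then show False
  proof
    assume "{e1, e2} - {f} \<subseteq> {e2}"
    then have "separation G {w} {e2} A B" by (rule separation_mono[OF s])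
    then show False using three_connected_no_vertex_edge_cut[OF assms] by blast
  next
    assume "{e1, e2} - {f} \<subseteq> {e1}"
    then have "separation G {w} {e1} A B" by (rule separation_mono[OF s])
    then show False using three_connected_no_vertex_edge_cut[OF assms] by blast
  qed
qed

subsection \<open>The gluing construction\<close>

text \<open>\<open>X\<close> is contracted to a new vertex \<open>None\<close>, which is joined to the three terminals in \<open>S\<close>,
  the \<open>S\<close>-ends of the edges leaving \<open>S\<close>.\<close>

locale gluing =
  fixes G :: "('v, 'e) mgraph" and S X :: "'v set" and ts :: "'v list"
  assumes mgraph: "mgraph G" and three_connected: "three_connected G"
    and partition: "S \<inter> X = {}" "S \<union> X = verts G"
    and card_X: "2 \<le> card X" and card_S: "3 \<le> card S"
    and terminals: "length ts = 3" "distinct ts" "set ts \<subseteq> S"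
    and crossing_terminal:
      "\<And>e. e \<in> edges G \<Longrightarrow> ends G e \<inter> S \<noteq> {} \<Longrightarrow> ends G e \<inter> X \<noteq> {} \<Longrightarrow>
        \<exists>t \<in> set ts. t \<in> ends G e"
    and terminal_edge_to_X: "\<And>t. t \<in> set ts \<Longrightarrow> \<exists>e \<in> edges G. t \<in> ends G e \<and> ends G e \<inter> X \<noteq> {}"
    and connected_X: "connected_set G X"
    and terminal_edge_in_S:
      "\<And>t z. t \<in> set ts \<Longrightarrow> z \<noteq> t \<Longrightarrow> \<exists>e \<in> edges G. t \<in> ends G e \<and> ends G e \<subseteq> S \<and> z \<notin> ends G e"
begin

definition glued :: "('v option, 'e + nat) mgraph" where
  "glued = glue G S (map (\<lambda>x. {x}) ts)"

lemma verts_glued: "verts glued = insert None (Some ` S)"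
  unfolding glued_def glue_def by simp

lemma edges_glued: "edges glued = Inl ` {e \<in> edges G. ends G e \<subseteq> S} \<union> Inr ` {0..<3}"
  unfolding glued_def glue_def using terminals(1) by simp

lemma ends_glued_Inl: "ends glued (Inl e) = Some ` ends G e"
  unfolding glued_def glue_def by simp

lemma ends_glued_Inr: "i < 3 \<Longrightarrow> ends glued (Inr i) = {None, Some (ts ! i)}"
  unfolding glued_def glue_def using terminals(1) by simp

lemma edges_glued_Diff_nonempty: "edges glued - {e} \<noteq> {}"
proof -
  have "Inr 0 \<in> edges glued" "Inr 1 \<in> edges glued" unfolding edges_glued by auto
  then show ?thesis by (metis Diff_iff empty_iff sum.inject(2) singletonD zero_neq_one)
qed

lemma edge_glued_cases:
  assumes "e \<in> edges glued"
  obtains e' where "e = Inl e'" "e' \<in> edges G" "ends G e' \<subseteq> S" | i where "e = Inr i" "i < 3"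
  using assms unfolding edges_glued by auto

lemma finite_S: "finite S"
  using mgraph partition(2) unfolding mgraph_def by (metis finite_Un)

lemma X_nonempty: "X \<noteq> {}"
  using card_X by auto

lemma terminal_in_S: "i < 3 \<Longrightarrow> ts ! i \<in> S"
  using terminals by (metis nth_mem subsetD)

lemma terminal_index_unique:
  assumes "card (B \<inter> set ts) \<le> 1"
  obtains j0 where "\<And>j. j < 3 \<Longrightarrow> ts ! j \<in> B \<Longrightarrow> j = j0"
proof (cases "\<exists>j<3. ts ! j \<in> B")
  case True
  then obtain j0 where j0: "j0 < 3" "ts ! j0 \<in> B" by blast
  have "ts ! j = ts ! j0" if "j < 3" "ts ! j \<in> B" for j
    using assms that j0 terminals(1) card_le_Suc0_iff_eq[of "B \<inter> set ts"]
    by (metis IntI One_nat_def finite_Int finite_set nth_mem)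
  then show ?thesis using that j0(1) terminals(1,2) nth_eq_iff_index_eq by metis
qed (use that in blast)

lemma terminals_pigeonhole:
  assumes "A \<inter> B = {}"
  shows "card (A \<inter> set ts) \<le> 1 \<or> card (B \<inter> set ts) \<le> 1"
proof -
  have "card (A \<inter> set ts) + card (B \<inter> set ts) = card ((A \<inter> set ts) \<union> (B \<inter> set ts))"
    using assms by (intro card_Un_disjoint[symmetric]) auto
  also have "\<dots> \<le> card (set ts)" by (intro card_mono) auto
  also have "\<dots> = 3" using terminals(1,2) distinct_card by metis
  finally show ?thesis by linarith
qed

lemma edge_cases:
  assumes "e \<in> edges G"
  obtains "ends G e \<subseteq> S" | "ends G e \<subseteq> X" | i x where "i < 3" "x \<in> X" "ends G e = {ts ! i, x}"
proof -
  consider "ends G e \<subseteq> S" | "ends G e \<subseteq> X" | "ends G e \<inter> S \<noteq> {}" "ends G e \<inter> X \<noteq> {}"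
    using mgraph_ends_subset[OF mgraph assms] partition(2) by blast
  then show ?thesis
  proof cases
    case 3
    then obtain t x where t: "t \<in> set ts" "t \<in> ends G e" and x: "x \<in> ends G e" "x \<in> X"
      using crossing_terminal[OF assms] by blast
    obtain i where i: "i < 3" "ts ! i = t" using t(1) terminals(1) by (metis in_set_conv_nth)
    have "t \<noteq> x" using t(1) x(2) terminals(3) partition(1) by blast
    then have "ends G e = {ts ! i, x}" using mgraph_ends_eq[OF mgraph assms t(2) x(1)] i(2) by simp
    then show ?thesis using that i(1) x(2) by blast
  qed (use that in blast)+
qed

lemma mgraph_glued: "mgraph glued"
proof -
  have "ends glued e \<subseteq> verts glued \<and> card (ends glued e) = 2" if "e \<in> edges glued" for e
    using that
  proof (cases rule: edge_glued_cases)
    case (1 e')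
    have "card (Some ` ends G e') = card (ends G e')" by (rule card_image) simp
    then show ?thesis using 1 ends_glued_Inl verts_glued mgraph_card_ends[OF mgraph 1(2)] by auto
  next
    case (2 i)
    then show ?thesis using ends_glued_Inr verts_glued terminal_in_S by auto
  qed
  moreover have "finite (edges glued)" unfolding edges_glued using mgraph unfolding mgraph_def by simp
  ultimately show ?thesis using finite_S verts_glued unfolding mgraph_def by simp
qed

lemma card_verts_glued: "card (verts glued) = card S + 1"
  using card_image[of Some S] finite_S verts_glued by simp

lemma terminal_edge_avoiding:
  assumes t: "t \<in> set ts" and R0: "card R0 \<le> 1" "finite R0" "t \<notin> R0"
  shows "\<exists>e \<in> edges G. t \<in> ends G e \<and> ends G e \<subseteq> S \<and> ends G e \<inter> R0 = {}"
proof -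
  obtain z where z: "z \<noteq> t" "R0 \<subseteq> {z}"
  proof (cases "R0 = {}")
    case True
    have "card (set ts) = 3" using terminals(1,2) distinct_card by metis
    then have "set ts \<noteq> {t}" by auto
    then show ?thesis using that True t by blast
  next
    case False
    then have "card R0 = 1" using R0(1,2) by (simp add: le_Suc_eq)
    then obtain r where "R0 = {r}" by (rule card_1_singletonE)
    then show ?thesis using R0(3) by (intro that[of r]) auto
  qed
  then show ?thesis using terminal_edge_in_S[OF t z(1)] by blast
qed

text \<open>A part \<open>A\<close> of \<open>G[S] - R0\<close> that is a union of components and contains at most one
  terminal would be cut off in \<open>G\<close> by \<open>R0\<close> and that terminal.\<close>

lemma no_small_terminal_side:
  assumes R0: "R0 \<subseteq> S" "card R0 \<le> 1" and A: "A \<subseteq> S - R0" "A \<noteq> {}"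
    and closed: "\<And>e. e \<in> edges G \<Longrightarrow> ends G e \<subseteq> S \<Longrightarrow> ends G e \<inter> R0 = {} \<Longrightarrow>
      ends G e \<subseteq> A \<or> ends G e \<inter> A = {}"
    and few: "card (A \<inter> set ts) \<le> 1"
  shows False
proof -
  let ?T = "A \<inter> set ts"
  have finR0: "finite R0" using R0(1) finite_S finite_subset by blast
  show False
  proof (cases "A \<subseteq> set ts")
    case True
    have "finite A" using A(1) finite_S finite_subset by blast
    then have "card A = 1" using few True A(2) by (simp add: Int_absorb2 le_Suc_eq)
    then obtain t where t: "A = {t}" "t \<in> set ts" using True card_1_singletonE by blast
    moreover have "t \<notin> R0" using t(1) A(1) by blast
    ultimately obtain e where e: "e \<in> edges G" "t \<in> ends G e" "ends G e \<subseteq> S" "ends G e \<inter> R0 = {}"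
      using terminal_edge_avoiding[OF _ R0(2) finR0] by blast
    then have "ends G e \<subseteq> {t}" using closed[OF e(1,3)] t(1) e(2) by blast
    then show False using mgraph_ends_not_singleton[OF mgraph e(1)] by blast
  next
    case False
    have "separation G (R0 \<union> ?T) {} (A - ?T) (verts G - (R0 \<union> ?T) - (A - ?T))"
    proof (rule separationI)
      fix e assume e: "e \<in> edges G" "e \<notin> {}" "ends G e \<inter> (R0 \<union> ?T) = {}"
      have "ends G e \<subseteq> A - ?T" if a: "a \<in> ends G e" "a \<in> A - ?T" for a
        using e(1)
      proof (cases rule: edge_cases)
        case 1
        then show ?thesis using closed[OF e(1) 1] e(3) a by blast
      next
        case 2
        then show ?thesis using a A(1) partition(1) by blast
      next
        case (3 i x)
        then have "a = ts ! i" using a A(1) partition(1) by auto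
        then show ?thesis using a(2) 3(1) terminals(1) by auto
      qed
      then show "ends G e \<subseteq> A - ?T \<or> ends G e \<subseteq> verts G - (R0 \<union> ?T) - (A - ?T)"
        using e(3) mgraph_ends_subset[OF mgraph e(1)] by blast
    next
      show "A - ?T \<noteq> {}" using False by blast
      show "verts G - (R0 \<union> ?T) - (A - ?T) \<noteq> {}"
        using X_nonempty partition R0(1) A(1) by blast
    qed (use A(1) partition(2) R0(1) in auto)
    moreover have "card (R0 \<union> ?T) \<le> 2"
      using card_Un_le[of R0 ?T] R0(2) few by linarith
    ultimately show False using three_connected_no_small_cut[OF mgraph three_connected] finR0 by blast
  qed
qed

definition contract :: "'v \<Rightarrow> 'v option" where
  "contract v = (if v \<in> S then Some v else None)"

lemma contract_edge_side:
  assumes s: "separation glued R {} A' B'" and R: "None \<notin> R"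
    and e: "e \<in> edges G" "ends G e \<inter> Some -` R = {}"
  shows "contract ` ends G e \<subseteq> A' \<or> contract ` ends G e \<subseteq> B'"
  using e(1)
proof (cases rule: edge_cases)
  case 1
  then have "Inl e \<in> edges glued" "ends glued (Inl e) \<inter> R = {}"
    using e edges_glued ends_glued_Inl by auto
  then have "ends glued (Inl e) \<subseteq> A' \<or> ends glued (Inl e) \<subseteq> B'"
    by (intro separationD(5)[OF s]) simp_all
  moreover have "contract ` ends G e = ends glued (Inl e)"
    using 1 ends_glued_Inl unfolding contract_def by auto
  ultimately show ?thesis by simp
next
  case 2
  then have None: "contract ` ends G e \<subseteq> {None}" using partition(1) unfolding contract_def by auto
  have "None \<in> A' \<or> None \<in> B'" using separationD(2)[OF s] R verts_glued by auto
  then show ?thesis using None by (elim disjE) (simp_all add: subset_insertI2 order_trans)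
next
  case (3 i x)
  then have "Inr i \<in> edges glued" "ends glued (Inr i) \<inter> R = {}"
    using e(2) R edges_glued ends_glued_Inr by auto
  then have "ends glued (Inr i) \<subseteq> A' \<or> ends glued (Inr i) \<subseteq> B'"
    by (intro separationD(5)[OF s]) simp_all
  moreover have "contract ` ends G e = ends glued (Inr i)"
    using 3 ends_glued_Inr terminal_in_S partition(1) unfolding contract_def by auto
  ultimately show ?thesis by simp
qed

lemma separation_contract:
  assumes s: "separation glued R {} A' B'" and R: "R \<subseteq> verts glued" "None \<notin> R"
  shows "separation G (Some -` R) {}
    {v \<in> verts G - Some -` R. contract v \<in> A'} {v \<in> verts G - Some -` R. contract v \<in> B'}"
proof -
  note AB' = separationD[OF s]
  have contract_in: "contract v \<in> A' \<union> B'" if "v \<in> verts G - Some -` R" for v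
    using that AB'(2) R(2) partition(2) verts_glued unfolding contract_def by auto
  have preimage: "{v \<in> verts G - Some -` R. contract v \<in> Y} \<noteq> {}"
    if Y: "Y \<subseteq> verts glued - R" "y \<in> Y" for Y y
  proof (cases y)
    case None
    obtain x where x: "x \<in> X" using X_nonempty by blast
    then have "x \<notin> S" using partition(1) by blast
    then have "Some x \<notin> R" using R(1) verts_glued by auto
    then have "x \<in> {v \<in> verts G - Some -` R. contract v \<in> Y}"
      using x \<open>x \<notin> S\<close> partition(2) Y(2) None unfolding contract_def by auto
    then show ?thesis by blast
  next
    case (Some s)
    then have "s \<in> S" "Some s \<notin> R" using Y verts_glued by auto
    then have "s \<in> {v \<in> verts G - Some -` R. contract v \<in> Y}"
      using partition(2) Y(2) Some unfolding contract_def by auto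
    then show ?thesis by blast
  qed
  show ?thesis
  proof (rule separationI)
    fix e assume e: "e \<in> edges G" "e \<notin> {}" "ends G e \<inter> Some -` R = {}"
    then show "ends G e \<subseteq> {v \<in> verts G - Some -` R. contract v \<in> A'} \<or>
        ends G e \<subseteq> {v \<in> verts G - Some -` R. contract v \<in> B'}"
      using contract_edge_side[OF s R(2) e(1,3)] mgraph_ends_subset[OF mgraph e(1)] by blast
  next
    show "{v \<in> verts G - Some -` R. contract v \<in> A'} \<noteq> {}" using preimage AB'(2,3) by blast
    show "{v \<in> verts G - Some -` R. contract v \<in> B'} \<noteq> {}" using preimage AB'(2,4) by blast
  qed (use AB'(1) contract_in in auto)
qed

lemma no_small_cut_avoiding_new_vertex:
  assumes s: "separation glued R {} A' B'" and R: "R \<subseteq> verts glued" "card R \<le> 2" "None \<notin> R"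
  shows False
proof -
  have finR: "finite R" using R(1) mgraph_glued finite_subset unfolding mgraph_def by blast
  have "card (Some ` Some -` R) = card (Some -` R)" by (rule card_image) simp
  then have "card (Some -` R) \<le> 2" using card_mono[OF finR, of "Some ` Some -` R"] R(2) by auto
  moreover have "finite (Some -` R)" using finR by (simp add: finite_vimageI)
  ultimately show False
    using three_connected_no_small_cut[OF mgraph three_connected] separation_contract[OF s R(1,3)] by blast
qed

text \<open>A separator of \<open>glued\<close> through the new vertex leaves a separation of \<open>G[S] - R0\<close> with
  \<open>|R0| \<le> 1\<close>, and one of its sides contains at most one terminal.\<close>

lemma no_small_cut_through_new_vertex:
  assumes s: "separation glued R {} A' B'" and R: "R \<subseteq> verts glued" "card R \<le> 2" "None \<in> R"
  shows False
proof -
  let ?R0 = "Some -` R"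
  have finR: "finite R" using R(1) mgraph_glued finite_subset unfolding mgraph_def by blast
  have "R = insert None (Some ` ?R0)" using R(1,3) verts_glued by auto
  then have "card R = card (insert None (Some ` ?R0))" by (rule arg_cong)
  also have "\<dots> = Suc (card (Some ` ?R0))" by (rule card_insert_disjoint) (use finR in auto)
  also have "card (Some ` ?R0) = card ?R0" by (rule card_image) simp
  finally have cR0: "card ?R0 \<le> 1" using R(2) by simp
  have R0S: "?R0 \<subseteq> S" using R(1) verts_glued by auto
  note AB' = separationD[OF s]
  have "verts glued - R \<subseteq> Some ` (S - ?R0)" using R(3) verts_glued by auto
  then have "A' \<union> B' \<subseteq> Some ` (S - ?R0)" by (simp only: AB'(2))
  then have "A' \<subseteq> Some ` (S - ?R0)" "B' \<subseteq> Some ` (S - ?R0)" by simp_all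
  then have nonempty: "Some -` A' \<noteq> {}" "Some -` B' \<noteq> {}"
    and sides: "Some -` A' \<subseteq> S - ?R0" "Some -` B' \<subseteq> S - ?R0"
    using AB'(3,4) by (auto simp: subset_image_iff inj_vimage_image_eq)
  have disjoint: "Some -` A' \<inter> Some -` B' = {}" using AB'(1) by auto
  have closed_A: "ends G e \<subseteq> Some -` A' \<or> ends G e \<inter> Some -` A' = {}"
    and closed_B: "ends G e \<subseteq> Some -` B' \<or> ends G e \<inter> Some -` B' = {}"
    if e: "e \<in> edges G" "ends G e \<subseteq> S" "ends G e \<inter> ?R0 = {}" for e
  proof -
    have "Inl e \<in> edges glued" "ends glued (Inl e) \<inter> R = {}"
      using e edges_glued ends_glued_Inl by auto
    then have "ends glued (Inl e) \<subseteq> A' \<or> ends glued (Inl e) \<subseteq> B'" by (intro AB'(5)) simp_all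
    then show "ends G e \<subseteq> Some -` A' \<or> ends G e \<inter> Some -` A' = {}"
      and "ends G e \<subseteq> Some -` B' \<or> ends G e \<inter> Some -` B' = {}"
      using AB'(1) unfolding ends_glued_Inl by blast+
  qed
  from terminals_pigeonhole[OF disjoint] show False
  proof
    assume few: "card (Some -` A' \<inter> set ts) \<le> 1"
    show False by (rule no_small_terminal_side[OF R0S cR0 sides(1) nonempty(1) _ few]) (rule closed_A)
  next
    assume few: "card (Some -` B' \<inter> set ts) \<le> 1"
    show False by (rule no_small_terminal_side[OF R0S cR0 sides(2) nonempty(2) _ few]) (rule closed_B)
  qed
qed

lemma three_connected_glued: "three_connected glued"
  unfolding three_connected_def
proof (intro conjI allI impI)
  show "card (verts glued) > 3" using card_verts_glued card_S by simp
next
  fix R assume R: "R \<subseteq> verts glued" "card R \<le> 2"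
  have "\<not> separation glued R {} A' B'" for A' B'
  proof
    assume s: "separation glued R {} A' B'"
    show False
    proof (cases "None \<in> R")
      case True
      then show False by (rule no_small_cut_through_new_vertex[OF s R])
    next
      case False
      then show False by (rule no_small_cut_avoiding_new_vertex[OF s R])
    qed
  qed
  moreover have "verts glued - R \<noteq> {}"
  proof -
    have "finite R" using R(1) mgraph_glued finite_subset unfolding mgraph_def by blast
    then show ?thesis using card_mono[of R "verts glued"] R(2) card_verts_glued card_S by auto
  qed
  ultimately show "connected (del_verts glued R)"
    using connected_del_iff[OF mgraph_glued, of "{}" R] by simp
qed

lemma glued_del_Inr_not_two_half_connected:
  assumes "i < 3"
  shows "\<not> two_half_connected (del_edges glued {Inr i})"
proof -
  define j where "j = (i + 1) mod 3"
  define k where "k = (i + 2) mod 3"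
  have "j < 3 \<and> k < 3 \<and> k \<noteq> i \<and> (\<forall>l<3. l \<noteq> i \<longrightarrow> l \<noteq> k \<longrightarrow> l = j)"
  proof -
    have "i = 0 \<or> i = 1 \<or> i = 2" using assms by auto
    then show ?thesis unfolding j_def k_def by auto
  qed
  then have jk: "j < 3" "k < 3" "k \<noteq> i" and other: "\<And>l. l < 3 \<Longrightarrow> l \<noteq> i \<Longrightarrow> l \<noteq> k \<Longrightarrow> l = j"
    by auto
  have "S - {ts ! j} \<noteq> {}" using card_S card_mono[of "{ts ! j}" S] by auto
  have sep: "separation glued {Some (ts ! j)} {Inr i, Inr k} {None} (Some ` (S - {ts ! j}))"
  proof (rule separationI)
    fix e assume e: "e \<in> edges glued" "e \<notin> {Inr i, Inr k}" "ends glued e \<inter> {Some (ts ! j)} = {}"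
    from e(1) show "ends glued e \<subseteq> {None} \<or> ends glued e \<subseteq> Some ` (S - {ts ! j})"
    proof (cases rule: edge_glued_cases)
      case (1 e')
      then show ?thesis using e(3) ends_glued_Inl by auto
    next
      case (2 l)
      then have "l = j" using e(2) other by blast
      then show ?thesis using e(3) 2 ends_glued_Inr by auto
    qed
  qed (use \<open>S - {ts ! j} \<noteq> {}\<close> terminal_in_S[OF jk(1)] verts_glued in auto)
  show ?thesis
    by (rule not_two_half_connected_del_edge[OF mgraph_glued _ sep])
      (use terminal_in_S[OF jk(1)] verts_glued edges_glued_Diff_nonempty in auto)
qed

lemma glued_del_Inl_not_two_half_connected_X:
  assumes s: "separation G {w} {f, g} A B" and "w \<in> X" "ends G f \<subseteq> S"
    and "ends G f \<inter> A \<noteq> {}" "ends G f \<inter> B \<noteq> {}"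
  shows "\<not> two_half_connected (del_edges glued {Inl f})"
proof -
  note AB = separationD[OF s]
  have S: "S \<subseteq> A \<union> B" using AB(2) partition assms(2) by blast
  have sep: "separation glued {None} {Inl f, Inl g} (Some ` (A \<inter> S)) (Some ` (B \<inter> S))"
  proof (rule separationI)
    fix e assume e: "e \<in> edges glued" "e \<notin> {Inl f, Inl g}" "ends glued e \<inter> {None} = {}"
    from e(1) show "ends glued e \<subseteq> Some ` (A \<inter> S) \<or> ends glued e \<subseteq> Some ` (B \<inter> S)"
    proof (cases rule: edge_glued_cases)
      case (1 e')
      then have "ends G e' \<subseteq> A \<or> ends G e' \<subseteq> B"
        using AB(5)[of e'] e(2) assms(2) partition(1) by blast
      then show ?thesis using 1 ends_glued_Inl by auto
    next
      case (2 l)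
      then show ?thesis using e(3) ends_glued_Inr by simp
    qed
  qed (use AB(1) S assms(3-5) verts_glued in auto)
  show ?thesis
    by (rule not_two_half_connected_del_edge[OF mgraph_glued _ sep]) (use verts_glued edges_glued_Diff_nonempty in auto)
qed

lemma glued_del_Inl_not_two_half_connected_S:
  assumes s: "separation G {w} {f, g} A B" and "w \<in> S" "ends G f \<subseteq> S" "ends G f \<inter> B \<noteq> {}"
    and few: "card (B \<inter> set ts) \<le> 1" and g: "B \<inter> set ts \<noteq> {} \<Longrightarrow> \<not> ends G g \<subseteq> S"
  shows "\<not> two_half_connected (del_edges glued {Inl f})"
proof -
  note AB = separationD[OF s]
  obtain j0 where j0: "\<And>j. j < 3 \<Longrightarrow> ts ! j \<in> B \<Longrightarrow> j = j0"
    using terminal_index_unique[OF few] by blast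
  (* The edge taking the place of g: g itself if it lies in S, else the edge to the terminal in B. *)
  define g' where "g' = (if B \<inter> set ts = {} then Inl g else Inr j0)"
  have S: "S - {w} \<subseteq> A \<union> B" using AB(2) partition by blast
  have sep: "separation glued {Some w} {Inl f, g'} (insert None (Some ` (A \<inter> S))) (Some ` (B \<inter> S))"
  proof (rule separationI)
    fix e assume e: "e \<in> edges glued" "e \<notin> {Inl f, g'}" "ends glued e \<inter> {Some w} = {}"
    from e(1) show "ends glued e \<subseteq> insert None (Some ` (A \<inter> S)) \<or> ends glued e \<subseteq> Some ` (B \<inter> S)"
    proof (cases rule: edge_glued_cases)
      case (1 e')
      have "e' \<noteq> g"
      proof
        assume "e' = g"
        then have "B \<inter> set ts = {}" using g 1(3) by blast
        then show False using e(2) 1(1) \<open>e' = g\<close> unfolding g'_def by simp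
      qed
      then have "ends G e' \<subseteq> A \<or> ends G e' \<subseteq> B"
        using AB(5)[of e'] 1 e(2,3) ends_glued_Inl by auto
      then show ?thesis using 1 ends_glued_Inl by auto
    next
      case (2 j)
      then have "ts ! j \<in> S - {w}" using e(3) terminal_in_S ends_glued_Inr by auto
      moreover have "ts ! j \<notin> B"
      proof
        assume "ts ! j \<in> B"
        then have "g' = Inr j0" "j = j0" using j0 2(2) terminals(1) unfolding g'_def by auto
        then show False using e(2) 2(1) by simp
      qed
      ultimately show ?thesis using 2 S ends_glued_Inr by auto
    qed
  next
    have "(A \<inter> S) \<union> (B \<inter> S) = S - {w}" using AB(2) partition(2) by blast
    then have "insert None (Some ` (A \<inter> S)) \<union> Some ` (B \<inter> S) = insert None (Some ` (S - {w}))"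
      by (simp add: image_Un[symmetric])
    also have "\<dots> = verts glued - {Some w}" using verts_glued by auto
    finally show "insert None (Some ` (A \<inter> S)) \<union> Some ` (B \<inter> S) = verts glued - {Some w}" .
    show "Some ` (B \<inter> S) \<noteq> {}" using assms(3,4) by auto
  qed (use AB(1) in auto)
  show ?thesis
    by (rule not_two_half_connected_del_edge[OF mgraph_glued _ sep])
      (use assms(2) verts_glued edges_glued_Diff_nonempty in auto)
qed

text \<open>The edge from a terminal in \<open>B\<close> into \<open>X \<subseteq> A\<close> crosses the separation, so it is \<open>g\<close>.\<close>

lemma second_edge_at_terminal:
  assumes s: "separation G {w} {f, g} A B" and "w \<in> S" "ends G f \<subseteq> S" "X \<subseteq> A"
    and t: "t \<in> B \<inter> set ts"
  shows "\<exists>x \<in> X. ends G g = {t, x}"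
proof -
  note AB = separationD[OF s]
  obtain e x where e: "e \<in> edges G" "t \<in> ends G e" "x \<in> ends G e" "x \<in> X"
    using terminal_edge_to_X t by blast
  have "t \<in> S" using t terminals(3) by blast
  then have ex: "ends G e = {t, x}" using mgraph_ends_eq[OF mgraph e(1-3)] e(4) partition(1) by blast
  have "x \<in> A" "x \<noteq> w" "t \<noteq> w" using assms(2,4) e(4) partition(1) t AB(2) by blast+
  then have "e \<in> crossing_edges G {w} A B" using e(1) t AB(1) ex unfolding crossing_edges_def by auto
  moreover have "e \<noteq> f" using ex assms(3) e(4) partition(1) by blast
  ultimately have "e = g" using s unfolding separation_def by blast
  then show ?thesis using ex e(4) by blast
qed

lemma terminals_opposite_X:
  assumes s: "separation G {w} {f, g} A B" and "w \<in> S" "ends G f \<subseteq> S" "X \<subseteq> A"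
  shows "card (B \<inter> set ts) \<le> 1" and "B \<inter> set ts \<noteq> {} \<Longrightarrow> \<not> ends G g \<subseteq> S"
proof -
  note g_end = second_edge_at_terminal[OF assms]
  have "B \<inter> set ts \<subseteq> {t}" if t: "t \<in> B \<inter> set ts" for t
  proof
    fix t' assume t': "t' \<in> B \<inter> set ts"
    obtain x x' where "x \<in> X" "x' \<in> X" "{t, x} = {t', x'}" using g_end[OF t] g_end[OF t'] by metis
    moreover have "t \<in> S" "t' \<in> S" using t t' terminals(3) by blast+
    ultimately show "t' \<in> {t}" using partition(1) by (metis doubleton_eq_iff disjoint_iff singletonI)
  qed
  then show "card (B \<inter> set ts) \<le> 1"
    using card_mono[of "{_}" "B \<inter> set ts"] by (cases "B \<inter> set ts = {}") fastforce+
  show "\<not> ends G g \<subseteq> S" if "B \<inter> set ts \<noteq> {}" using that g_end partition(1) by blast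
qed

text \<open>If \<open>X\<close> meets both sides, the edge of \<open>G[X]\<close> across them must be \<open>g\<close>.\<close>

lemma second_edge_in_X:
  assumes s: "separation G {w} {f, g} A B" and "w \<in> S" "ends G f \<subseteq> S"
    and X: "X \<inter> A \<noteq> {}" "X \<inter> B \<noteq> {}"
  shows "ends G g \<subseteq> X"
proof -
  note AB = separationD[OF s]
  have "X \<subseteq> A \<union> B" using AB(2) partition assms(2) by blast
  have "X \<inter> A \<noteq> X" using X(2) AB(1) by blast
  then obtain e where e: "e \<in> edges G" "ends G e \<subseteq> X" "ends G e \<inter> (X \<inter> A) \<noteq> {}"
    "ends G e \<inter> (X - X \<inter> A) \<noteq> {}"
    using connected_X X(1) unfolding connected_set_def by (metis inf_le1)
  have "ends G e \<inter> {w} = {}" using e(2) assms(2) partition(1) by blast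
  then have "e \<in> crossing_edges G {w} A B"
    using e AB(1) \<open>X \<subseteq> A \<union> B\<close> unfolding crossing_edges_def by blast
  moreover have "e \<noteq> f" using e(2,3) assms(3) partition(1) by blast
  ultimately have "e = g" using s unfolding separation_def by blast
  then show ?thesis using e(2) by blast
qed

lemma glued_del_Inl_not_two_half_connected:
  assumes critical: "\<forall>f \<in> edges G. \<not> two_half_connected (del_edges G {f})"
    and f: "f \<in> edges G" "ends G f \<subseteq> S"
  shows "\<not> two_half_connected (del_edges glued {Inl f})"
proof -
  obtain w g A B where w: "w \<in> verts G" and g: "g \<in> edges G" "g \<noteq> f"
    and s: "separation G {w} {f, g} A B"
    using critical_edge_cut[OF mgraph three_connected f(1)] critical f(1) by metis
  note AB = separationD[OF s]
  note s' = separation_sym[OF s]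
  have "f \<in> crossing_edges G {w} A B"
    using separation_insert_edge[OF s] three_connected_no_vertex_edge_cut[OF mgraph three_connected]
    by blast
  then obtain a b where "a \<in> A" "b \<in> B" "ends G f = {a, b}"
    using mgraph_crossing_edge_ends[OF mgraph _ AB(2)] by blast
  then have fA: "ends G f \<inter> A \<noteq> {}" and fB: "ends G f \<inter> B \<noteq> {}" by auto
  show ?thesis
  proof (cases "w \<in> X")
    case True
    then show ?thesis using glued_del_Inl_not_two_half_connected_X[OF s True f(2) fA fB] by simp
  next
    case False
    then have wS: "w \<in> S" using w partition(2) by blast
    have "X \<subseteq> A \<union> B" using AB(2) partition False by blast
    then consider "X \<subseteq> A" | "X \<subseteq> B" | "X \<inter> A \<noteq> {}" "X \<inter> B \<noteq> {}" by blast
    then show ?thesis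
    proof cases
      case 1
      then show ?thesis
        using glued_del_Inl_not_two_half_connected_S[OF s wS f(2) fB] terminals_opposite_X[OF s wS f(2)]
        by blast
    next
      case 2
      then show ?thesis
        using glued_del_Inl_not_two_half_connected_S[OF s' wS f(2) fA] terminals_opposite_X[OF s' wS f(2)]
        by blast
    next
      case 3
      then have g_S: "\<not> ends G g \<subseteq> S"
        using second_edge_in_X[OF s wS f(2)] partition(1) mgraph_ends_not_singleton[OF mgraph g(1)]
        by blast
      from terminals_pigeonhole[OF AB(1)] show ?thesis
      proof
        assume "card (B \<inter> set ts) \<le> 1"
        then show ?thesis using glued_del_Inl_not_two_half_connected_S[OF s wS f(2) fB] g_S by blast
      next
        assume "card (A \<inter> set ts) \<le> 1"
        then show ?thesis using glued_del_Inl_not_two_half_connected_S[OF s' wS f(2) fA] g_S by blast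
      qed
    qed
  qed
qed

lemma good_piece_glued:
  assumes "\<forall>f \<in> edges G. \<not> two_half_connected (del_edges G {f})"
  shows "good_piece glued G"
  unfolding good_piece_def critical_two_half_connected_def
proof (intro conjI ballI)
  show "two_half_connected glued"
    using three_connected_two_half_connected[OF mgraph_glued three_connected_glued] .
  show "three_connected glued" by (rule three_connected_glued)
next
  fix e assume "e \<in> edges glued"
  then show "\<not> two_half_connected (del_edges glued {e})"
  proof (cases rule: edge_glued_cases)
    case (1 e')
    then show ?thesis using glued_del_Inl_not_two_half_connected[OF assms] by simp
  next
    case (2 i)
    then show ?thesis using glued_del_Inr_not_two_half_connected by simp
  qed
next
  have "card (verts G) = card S + card X"
    using partition finite_S mgraph unfolding mgraph_def by (metis card_Un_disjoint finite_Un)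
  then show "card (verts glued) < card (verts G)" using card_verts_glued card_X by simp
qed

end

subsection \<open>Cutting along three edges\<close>

text \<open>Otherwise \<open>{u, ur}\<close> would cut off the rest of \<open>C1\<close>, or \<open>ur\<close> would have only the
  neighbours \<open>u\<close> and \<open>vr\<close>.\<close>

lemma edge_cut_shared_end:
  assumes mg: "mgraph G" and tc: "three_connected G" and s: "separation G {} {p, q, r} C1 C2"
    and ends: "ends G p = {u, vp}" "ends G q = {u, vq}" "ends G r = {ur, vr}"
    and C1: "u \<in> C1" "ur \<in> C1" and C2: "vp \<in> C2" "vq \<in> C2" "vr \<in> C2"
  shows "C1 = {u}"
proof -
  note S = separationD[OF s]
  have "C1 \<subseteq> {u, ur} \<or> C2 \<subseteq> {u, ur}"
    by (rule three_connected_small_side[OF mg tc s]) (use ends in \<open>auto simp: card_insert_if\<close>)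
  then have C1_sub: "C1 \<subseteq> {u, ur}" using S(1,4) C1 by blast
  show ?thesis
  proof (rule ccontr)
    assume "C1 \<noteq> {u}"
    then have ur: "ur \<noteq> u" "C1 = {u, ur}" using C1_sub C1 by auto
    have nbrs: "ends G e \<subseteq> {ur, u, vr}" if e: "e \<in> edges G" "ur \<in> ends G e" for e
    proof (cases "e \<in> {p, q, r}")
      case True
      then show ?thesis using e(2) ends ur(1) C2 C1(2) S(1) by auto
    next
      case False
      then have "ends G e \<subseteq> C1 \<or> ends G e \<subseteq> C2" using S(5)[OF e(1)] by blast
      then show ?thesis using e(2) C1(2) S(1) ur(2) by blast
    qed
    have "ur \<in> verts G" "ur \<noteq> vr" using C1(2) C2(3) S(1,2) by blast+
    then show False using three_connected_three_neighbours[OF mg tc _ ur(1) _ nbrs] by blast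
  qed
qed

lemma edge_cut_not_singleton:
  assumes mg: "mgraph G" and s: "separation G {} {e0, e1, e2} C1 C2"
    and d: "distinct [e0, e1, e2]" and E: "e0 \<in> edges G" "e1 \<in> edges G" "e2 \<in> edges G"
    and ends: "ends G e0 = {u0, v0}" "ends G e1 = {u1, v1}" "ends G e2 = {u2, v2}"
    and C1: "u0 \<in> C1" "u1 \<in> C1" "u2 \<in> C1"
    and c: "c \<in> ends G e0" "c \<notin> ends G e1" and nd: "\<not> degenerate G c e1 e2"
  shows "C1 \<noteq> {a}"
proof
  assume a: "C1 = {a}"
  note S = separationD[OF s]
  have u: "u0 = a" "u1 = a" "u2 = a" using C1 a by auto
  have "{e \<in> edges G. a \<in> ends G e} = {e0, e1, e2}"
  proof (intro equalityI subsetI)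
    fix e assume e: "e \<in> {e \<in> edges G. a \<in> ends G e}"
    show "e \<in> {e0, e1, e2}"
    proof (rule ccontr)
      assume "e \<notin> {e0, e1, e2}"
      then have "ends G e \<subseteq> C1 \<or> ends G e \<subseteq> C2" using S(5) e by blast
      then have "ends G e \<subseteq> {a}" using e a S(1) by blast
      then show False using mgraph_ends_not_singleton[OF mg] e by blast
    qed
  qed (use E ends u in auto)
  moreover have "ends G e0 = {a, c}" using c ends(1,2) u by auto
  moreover have "a \<in> verts G" using a S(2) by blast
  moreover have "card {e0, e1, e2} = 3" using d by simp
  ultimately have "degenerate G c e1 e2" unfolding degenerate_def using E(1) by blast
  then show False using nd by simp
qed

lemma edge_cut_ends_distinct:
  assumes mg: "mgraph G" and tc: "three_connected G" and s: "separation G {} {e0, e1, e2} C1 C2"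
    and d: "distinct [e0, e1, e2]" and E: "e0 \<in> edges G" "e1 \<in> edges G" "e2 \<in> edges G"
    and ends: "ends G e0 = {u0, v0}" "ends G e1 = {u1, v1}" "ends G e2 = {u2, v2}"
    and C1: "u0 \<in> C1" "u1 \<in> C1" "u2 \<in> C1" and C2: "v0 \<in> C2" "v1 \<in> C2" "v2 \<in> C2"
    and c: "c \<in> ends G e0" "c \<notin> ends G e1" and nd: "\<not> degenerate G c e1 e2"
  shows "distinct [u0, u1, u2]"
proof -
  have single: "C1 \<noteq> {a}" for a by (rule edge_cut_not_singleton[OF mg s d E ends C1 c nd])
  have s': "separation G {} {e0, e2, e1} C1 C2" "separation G {} {e1, e2, e0} C1 C2"
    using s by (simp_all add: insert_commute)
  have "u0 \<noteq> u1"
    using edge_cut_shared_end[OF mg tc s, of u0 v0 v1 u2 v2] ends C1 C2 single by auto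
  moreover have "u0 \<noteq> u2"
    using edge_cut_shared_end[OF mg tc s'(1), of u0 v0 v2 u1 v1] ends C1 C2 single by auto
  moreover have "u1 \<noteq> u2"
    using edge_cut_shared_end[OF mg tc s'(2), of u1 v1 v2 u0 v0] ends C1 C2 single by auto
  ultimately show ?thesis by simp
qed

lemma gluing_edge_cut:
  assumes mg: "mgraph G" and tc: "three_connected G" and s: "separation G {} {e0, e1, e2} C1 C2"
    and d: "distinct [e0, e1, e2]" and E: "e0 \<in> edges G" "e1 \<in> edges G" "e2 \<in> edges G"
    and ends: "ends G e0 = {u0, v0}" "ends G e1 = {u1, v1}" "ends G e2 = {u2, v2}"
    and C1: "u0 \<in> C1" "u1 \<in> C1" "u2 \<in> C1" and C2: "v0 \<in> C2" "v1 \<in> C2" "v2 \<in> C2"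
    and c: "c \<in> ends G e0" "c \<notin> ends G e1" and nd: "\<not> degenerate G c e1 e2"
  shows "gluing G C1 C2 [u0, u1, u2]"
proof -
  note S = separationD[OF s]
  have s': "separation G {} {e0, e1, e2} C2 C1" by (rule separation_sym[OF s])
  have ends': "ends G e0 = {v0, u0}" "ends G e1 = {v1, u1}" "ends G e2 = {v2, u2}"
    using ends by (simp_all add: insert_commute)
  have du: "distinct [u0, u1, u2]" by (rule edge_cut_ends_distinct[OF mg tc s d E ends C1 C2 c nd])
  have dv: "distinct [v0, v1, v2]" by (rule edge_cut_ends_distinct[OF mg tc s' d E ends' C2 C1 c nd])
  have fin: "finite C1" "finite C2" using mg S(2) unfolding mgraph_def by (metis finite_Diff finite_Un)+
  have "card {u0, u1, u2} \<le> card C1" "card {v0, v1, v2} \<le> card C2"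
    using fin C1 C2 by (intro card_mono; simp)+
  then have card: "3 \<le> card C1" "2 \<le> card C2" using du dv by simp_all
  show ?thesis
  proof
    show "C1 \<inter> C2 = {}" "C1 \<union> C2 = verts G" using S(1,2) by auto
  next
    fix e assume e: "e \<in> edges G" "ends G e \<inter> C1 \<noteq> {}" "ends G e \<inter> C2 \<noteq> {}"
    then have "e \<in> {e0, e1, e2}" using S(1) S(5)[OF e(1)] by blast
    then show "\<exists>t \<in> set [u0, u1, u2]. t \<in> ends G e" using ends by auto
  next
    fix t assume "t \<in> set [u0, u1, u2]"
    then show "\<exists>e \<in> edges G. t \<in> ends G e \<and> ends G e \<inter> C2 \<noteq> {}" using E ends C2 by auto
  next
    show "connected_set G C2"
      by (rule minimal_cut_connected_set[OF mg three_connected_minimal_cut_edges[OF mg tc] _ s']) simp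
  next
    fix t z assume t: "t \<in> set [u0, u1, u2]" and z: "z \<noteq> t"
    note terminal_edge = three_connected_separation_edge_avoiding[OF mg tc s, simplified]
    have u_C2: "u0 \<notin> C2" "u1 \<notin> C2" "u2 \<notin> C2" using C1 S(1) by blast+
    consider "t = u0" | "t = u1" | "t = u2" using t by auto
    then show "\<exists>e \<in> edges G. t \<in> ends G e \<and> ends G e \<subseteq> C1 \<and> z \<notin> ends G e"
    proof cases
      case 1
      show ?thesis unfolding 1
        by (rule terminal_edge[OF C1(1) _ C2(1)]) (use z 1 du ends C2 u_C2 in auto)
    next
      case 2
      show ?thesis unfolding 2
        by (rule terminal_edge[OF C1(2) _ C2(2)]) (use z 2 du ends C2 u_C2 in auto)
    next
      case 3
      show ?thesis unfolding 3
        by (rule terminal_edge[OF C1(3) _ C2(3)]) (use z 3 du ends C2 u_C2 in auto)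
    qed
  qed (use mg tc card d C1 du in auto)
qed

lemma good_piece_edge_cut:
  assumes mg: "mgraph G" and tc: "three_connected G" and cr: "critical_two_half_connected G"
    and E: "e0 \<in> edges G" "e1 \<in> edges G" "e2 \<in> edges G"
    and c: "c \<in> ends G e0" "c \<notin> ends G e1" "c \<notin> ends G e2" and nd: "\<not> degenerate G c e1 e2"
    and comps: "components (del_edges G {e0, e1, e2}) = {C1, C2}" "C1 \<noteq> C2"
  shows "good_piece (glue G C1 [ends G e0 \<inter> C1, ends G e1 \<inter> C1, ends G e2 \<inter> C1]) G"
proof -
  have min: "minimal_cut G {} {e0, e1, e2}" by (rule three_connected_minimal_cut_edges[OF mg tc])
  have s: "separation G {} {e0, e1, e2} C1 C2"
    using minimal_cut_separation_components[OF mg min _ _ comps(2)] comps(1) by simp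
  have "e1 \<noteq> e2"
  proof
    assume "e1 = e2"
    then have "separation G {} {e0, e1} C1 C2" using s by simp
    then show False using three_connected_no_two_edge_cut[OF mg tc] by blast
  qed
  then have d: "distinct [e0, e1, e2]" using c by auto
  obtain u0 v0 u1 v1 u2 v2 where
    ends: "ends G e0 = {u0, v0}" "ends G e1 = {u1, v1}" "ends G e2 = {u2, v2}"
    and C1: "u0 \<in> C1" "u1 \<in> C1" "u2 \<in> C1" and C2: "v0 \<in> C2" "v1 \<in> C2" "v2 \<in> C2"
    using minimal_cut_crossing(3)[OF mg min _ s] by (metis insertCI)
  interpret gluing G C1 C2 "[u0, u1, u2]"
    by (rule gluing_edge_cut[OF mg tc s d E ends C1 C2 c(1,2) nd])
  have "[ends G e0 \<inter> C1, ends G e1 \<inter> C1, ends G e2 \<inter> C1] = map (\<lambda>x. {x}) [u0, u1, u2]"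
    using ends C1 C2 separationD(1)[OF s] by auto
  then show ?thesis
    using good_piece_glued cr unfolding glued_def critical_two_half_connected_def by simp
qed

lemma good_pieces_edge_cut:
  assumes "mgraph G" "three_connected G" "critical_two_half_connected G"
    and "e0 \<in> edges G" "e1 \<in> edges G" "e2 \<in> edges G"
    and "c \<in> ends G e0" "c \<notin> ends G e1" "c \<notin> ends G e2" "\<not> degenerate G c e1 e2"
    and comps: "components (del_edges G {e0, e1, e2}) = {C1, C2}" "C1 \<noteq> C2"
  shows "good_piece (glue G C1 [ends G e0 \<inter> C1, ends G e1 \<inter> C1, ends G e2 \<inter> C1]) G"
    and "good_piece (glue G C2 [ends G e0 \<inter> C2, ends G e1 \<inter> C2, ends G e2 \<inter> C2]) G"
proof -
  have "components (del_edges G {e0, e1, e2}) = {C2, C1}" using comps(1) by (simp add: insert_commute)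
  then show "good_piece (glue G C2 [ends G e0 \<inter> C2, ends G e1 \<inter> C2, ends G e2 \<inter> C2]) G"
    using good_piece_edge_cut[OF assms(1-10)] comps(2) by blast
qed (rule good_piece_edge_cut[OF assms])

subsection \<open>Cutting at a vertex and two edges\<close>

lemma v2e_separator_separation:
  assumes mg: "mgraph G" and tc: "three_connected G" and sep: "v2e_separator G c e1 e2"
  obtains A B where "separation G {c} {e1, e2} A B"
    and "c \<in> verts G" "e1 \<in> edges G" "e2 \<in> edges G" "e1 \<noteq> e2"
    and "c \<notin> ends G e1" "c \<notin> ends G e2"
proof -
  have c: "c \<in> verts G" "e1 \<in> edges G" "e2 \<in> edges G"
    and nc: "\<not> connected (del_vert (del_edges G {e1, e2}) c)"
    using sep unfolding v2e_separator_def by auto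
  have "card (verts G) > 3" using tc unfolding three_connected_def by blast
  then have "verts G - {c} \<noteq> {}" using card_mono[of "{c}" "verts G"] by auto
  then obtain A B where s: "separation G {c} {e1, e2} A B" using nc connected_del_vert_iff[OF mg] by blast
  have min: "minimal_cut G {c} {e1, e2}" by (rule three_connected_minimal_cut_vertex_edges[OF mg tc])
  have "c \<notin> ends G e1" "c \<notin> ends G e2" using minimal_cut_crossing(2)[OF mg min _ s] by blast+
  moreover have "e1 \<noteq> e2"
  proof
    assume "e1 = e2"
    then have "separation G {c} {e1} A B" using s by simp
    then show False using three_connected_no_vertex_edge_cut[OF mg tc] by blast
  qed
  ultimately show ?thesis using that s c by blast
qed

lemma card_components_vertex_cut:
  assumes mg: "mgraph G" and tc: "three_connected G" and s: "separation G {c} {e1, e2} A B"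
  shows "card (components (del_vert (del_edges G {e1, e2}) c)) = 2"
proof -
  have "components (del_vert (del_edges G {e1, e2}) c) = {A, B}"
    using minimal_cut_components[OF mg three_connected_minimal_cut_vertex_edges[OF mg tc] _ s]
    by (simp add: del_vert_eq_del_verts)
  moreover have "A \<noteq> B" using separationD(1,3)[OF s] by blast
  ultimately show ?thesis by simp
qed

lemma vertex_cut_shared_end:
  assumes mg: "mgraph G" and tc: "three_connected G" and s: "separation G {c} {e1, e2} C1 C2"
    and ends: "ends G e1 = {u, v1}" "ends G e2 = {u, v2}" and "u \<in> C1"
  shows "C1 = {u}"
proof -
  have "C1 \<subseteq> {u} \<or> C2 \<subseteq> {u}"
    by (rule three_connected_small_side[OF mg tc s]) (use ends in \<open>auto simp: card_insert_if\<close>)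
  then show ?thesis using assms(6) separationD(1,4)[OF s] by blast
qed

text \<open>Otherwise \<open>C1 = {u1}\<close>, and all edges at \<open>u1\<close> other than \<open>e1\<close>, \<open>e2\<close> go to \<open>c\<close>; there is
  one by 3-connectivity and only one by criticality, so \<open>(c, e1, e2)\<close> would be degenerate.\<close>

lemma vertex_cut_ends_distinct:
  assumes mg: "mgraph G" and tc: "three_connected G"
    and critical: "\<forall>f \<in> edges G. \<not> two_half_connected (del_edges G {f})"
    and s: "separation G {c} {e1, e2} C1 C2"
    and d: "e1 \<noteq> e2" and E: "e1 \<in> edges G" "e2 \<in> edges G"
    and ends: "ends G e1 = {u1, v1}" "ends G e2 = {u2, v2}"
    and C1: "u1 \<in> C1" "u2 \<in> C1" and C2: "v1 \<in> C2" "v2 \<in> C2"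
    and nd: "\<not> degenerate G c e1 e2"
  shows "u1 \<noteq> u2"
proof
  assume u: "u1 = u2"
  note S = separationD[OF s]
  have c: "c \<notin> ends G e1" "c \<notin> ends G e2" "u1 \<noteq> c" using ends C1 C2 S(2) by auto
  have C1_eq: "C1 = {u1}" using vertex_cut_shared_end[OF mg tc s ends(1) _ C1(1)] ends(2) u by blast
  have other: "ends G e = {u1, c}" if e: "e \<in> edges G" "u1 \<in> ends G e" "e \<noteq> e1" "e \<noteq> e2" for e
  proof (cases "c \<in> ends G e")
    case True
    then show ?thesis using mgraph_ends_eq[OF mg e(1,2)] c(3) by blast
  next
    case False
    then have "ends G e \<subseteq> C1 \<or> ends G e \<subseteq> C2" using S(5)[OF e(1)] e(3,4) by blast
    then show ?thesis
      using C1_eq C1(1) S(1) e(2) mgraph_ends_not_singleton[OF mg e(1)] by blast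
  qed
  have u1: "u1 \<in> verts G" "u1 \<noteq> v1" "u1 \<noteq> v2" using C1 C2 S(1,2) by blast+
  obtain e0 where e0: "e0 \<in> edges G" "ends G e0 = {u1, c}"
  proof (rule ccontr)
    assume no_e0: "\<not> thesis"
    note e0_intro = that
    have nbrs: "ends G e \<subseteq> {u1, v1, v2}" if e: "e \<in> edges G" "u1 \<in> ends G e" for e
    proof (cases "e = e1 \<or> e = e2")
      case True
      then show ?thesis using ends u by auto
    next
      case False
      then have "ends G e = {u1, c}" using other e by blast
      then show ?thesis using no_e0 e0_intro e(1) by blast
    qed
    show False by (rule three_connected_three_neighbours[OF mg tc u1 nbrs])
  qed
  have "{e \<in> edges G. u1 \<in> ends G e} = {e0, e1, e2}"
  proof (intro equalityI subsetI)
    fix e assume e: "e \<in> {e \<in> edges G. u1 \<in> ends G e}"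
    show "e \<in> {e0, e1, e2}"
    proof (cases "e = e1 \<or> e = e2")
      case False
      then have "ends G e = ends G e0" using other e e0(2) by blast
      then show ?thesis using critical_no_parallel_edges[OF mg tc critical _ e0(1)] e by blast
    qed blast
  qed (use e0 E ends u in auto)
  moreover have "card {e0, e1, e2} = 3"
  proof -
    have "e0 \<noteq> e1" "e0 \<noteq> e2" using e0(2) c by auto
    then show ?thesis using d by simp
  qed
  ultimately have "degenerate G c e1 e2" unfolding degenerate_def using e0 u1(1) by blast
  then show False using nd by simp
qed

text \<open>If every edge from \<open>c\<close> into \<open>C1\<close> ended in \<open>z\<close>, then \<open>e1\<close>, \<open>e2\<close> and the (by
  criticality unique) edge \<open>cz\<close> would separate \<open>C1\<close> from \<open>C2 + c\<close>.\<close>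

lemma vertex_cut_edge_at_cut_vertex:
  assumes mg: "mgraph G" and tc: "three_connected G"
    and critical: "\<forall>f \<in> edges G. \<not> two_half_connected (del_edges G {f})"
    and s: "separation G {c} {e1, e2} C1 C2" and cV: "c \<in> verts G"
    and no_edge_cut: "\<not> (\<exists>e0 \<in> edges G. c \<in> ends G e0 \<and> \<not> connected (del_edges G {e0, e1, e2}))"
    and z: "z \<noteq> c"
  shows "\<exists>e \<in> edges G. c \<in> ends G e \<and> ends G e \<subseteq> insert c C1 \<and> z \<notin> ends G e"
proof (rule ccontr)
  assume none: "\<not> ?thesis"
  note S = separationD[OF s]
  let ?P = "{e \<in> edges G. ends G e = {c, z}}"
  have sep: "separation G {} ({e1, e2} \<union> ?P) C1 (insert c C2)"
  proof (rule separationI)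
    fix e assume e: "e \<in> edges G" "e \<notin> {e1, e2} \<union> ?P" "ends G e \<inter> {} = {}"
    show "ends G e \<subseteq> C1 \<or> ends G e \<subseteq> insert c C2"
    proof (cases "c \<in> ends G e")
      case True
      then obtain y where y: "y \<noteq> c" "ends G e = {c, y}" using mgraph_other_end[OF mg e(1)] by blast
      have "y \<notin> C1"
      proof
        assume "y \<in> C1"
        then have "z \<in> ends G e" using none e(1) True y(2) by blast
        then show False using e(1,2) y z by auto
      qed
      then show ?thesis using y(2) mgraph_ends_subset[OF mg e(1)] S(2) by blast
    next
      case False
      then show ?thesis using S(5)[OF e(1)] e(2) by blast
    qed
  qed (use S(1-4) cV in auto)
  show False
  proof (cases "?P = {}")
    case True
    with sep have "separation G {} {e1, e2} C1 (insert c C2)" by (simp only: Un_empty_right)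
    then show False using three_connected_no_two_edge_cut[OF mg tc] by blast
  next
    case False
    then obtain e0 where e0: "e0 \<in> edges G" "ends G e0 = {c, z}" by blast
    have "e = e0" if "e \<in> ?P" for e
      using that e0(2) critical_no_parallel_edges[OF mg tc critical _ e0(1)] by auto
    then have "{e1, e2} \<union> ?P = {e0, e1, e2}" using e0 by blast
    with sep have "separation G {} {e0, e1, e2} C1 (insert c C2)" by (simp only:)
    then have "\<not> connected (del_edges G {e0, e1, e2})" using connected_del_edges_iff[OF mg] by blast
    then show False using no_edge_cut e0 by blast
  qed
qed

lemma vertex_cut_edge_to_side:
  assumes mg: "mgraph G" and tc: "three_connected G"
    and s: "separation G {c} {e1, e2} C1 C2" and cV: "c \<in> verts G"
  shows "\<exists>e \<in> edges G. c \<in> ends G e \<and> ends G e \<inter> C2 \<noteq> {}"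
proof (rule ccontr)
  assume none: "\<not> ?thesis"
  note S = separationD[OF s]
  have "separation G {} {e1, e2} (insert c C1) C2"
  proof (rule separationI)
    fix e assume e: "e \<in> edges G" "e \<notin> {e1, e2}" "ends G e \<inter> {} = {}"
    show "ends G e \<subseteq> insert c C1 \<or> ends G e \<subseteq> C2"
    proof (cases "c \<in> ends G e")
      case True
      then show ?thesis using none e(1) mgraph_ends_subset[OF mg e(1)] S(2) by blast
    next
      case False
      then show ?thesis using S(5)[OF e(1)] e(2) by blast
    qed
  qed (use S(1-4) cV in auto)
  then show False using three_connected_no_two_edge_cut[OF mg tc] by blast
qed

lemma gluing_vertex_cut:
  assumes mg: "mgraph G" and tc: "three_connected G"
    and critical: "\<forall>f \<in> edges G. \<not> two_half_connected (del_edges G {f})"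
    and s: "separation G {c} {e1, e2} C1 C2" and cV: "c \<in> verts G"
    and E: "e1 \<in> edges G" "e2 \<in> edges G"
    and ends: "ends G e1 = {u1, v1}" "ends G e2 = {u2, v2}"
    and C1: "u1 \<in> C1" "u2 \<in> C1" and C2: "v1 \<in> C2" "v2 \<in> C2"
    and du: "u1 \<noteq> u2" and dv: "v1 \<noteq> v2"
    and no_edge_cut: "\<not> (\<exists>e0 \<in> edges G. c \<in> ends G e0 \<and> \<not> connected (del_edges G {e0, e1, e2}))"
  shows "gluing G (insert c C1) C2 [u1, u2, c]"
proof -
  note S = separationD[OF s]
  have cC: "c \<notin> C1" "c \<notin> C2" using S(2) by blast+
  have fin: "finite C1" "finite C2" using mg S(2) unfolding mgraph_def by (metis finite_Diff finite_Un)+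
  have "card {u1, u2} \<le> card C1" "card {v1, v2} \<le> card C2"
    using fin C1 C2 by (intro card_mono; simp)+
  then have card: "3 \<le> card (insert c C1)" "2 \<le> card C2" using du dv cC(1) fin(1) by simp_all
  have partition: "insert c C1 \<inter> C2 = {}" "insert c C1 \<union> C2 = verts G" using S(1,2) cC cV by auto
  show ?thesis
  proof
    fix e assume e: "e \<in> edges G" "ends G e \<inter> insert c C1 \<noteq> {}" "ends G e \<inter> C2 \<noteq> {}"
    show "\<exists>t \<in> set [u1, u2, c]. t \<in> ends G e"
    proof (cases "c \<in> ends G e")
      case False
      then have "e \<in> {e1, e2}" using S(1) S(5)[OF e(1)] e(2,3) by blast
      then show ?thesis using ends by auto
    qed simp
  next
    fix t assume "t \<in> set [u1, u2, c]"
    then show "\<exists>e \<in> edges G. t \<in> ends G e \<and> ends G e \<inter> C2 \<noteq> {}"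
      using vertex_cut_edge_to_side[OF mg tc s cV] E ends C2 by auto
  next
    show "connected_set G C2"
      by (rule minimal_cut_connected_set[OF mg three_connected_minimal_cut_vertex_edges[OF mg tc] _
            separation_sym[OF s]]) simp
  next
    fix t z assume t: "t \<in> set [u1, u2, c]" and z: "z \<noteq> t"
    note terminal_edge = three_connected_separation_edge_avoiding[OF mg tc s, simplified]
    consider "t = u1" | "t = u2" | "t = c" using t by auto
    then show "\<exists>e \<in> edges G. t \<in> ends G e \<and> ends G e \<subseteq> insert c C1 \<and> z \<notin> ends G e"
    proof cases
      case 1
      show ?thesis unfolding 1
        by (rule terminal_edge[OF C1(1) _ C2(1)]) (use z 1 ends du C2 C1 S(1) in auto)
    next
      case 2
      show ?thesis unfolding 2
        by (rule terminal_edge[OF C1(2) _ C2(2)]) (use z 2 ends du C2 C1 S(1) in auto)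
    next
      case 3
      then show ?thesis
        using vertex_cut_edge_at_cut_vertex[OF mg tc critical s cV no_edge_cut] z by blast
    qed
  qed (use mg tc card partition du C1 cC in auto)
qed

lemma good_piece_vertex_cut:
  assumes mg: "mgraph G" and tc: "three_connected G" and cr: "critical_two_half_connected G"
    and cV: "c \<in> verts G" and E: "e1 \<in> edges G" "e2 \<in> edges G" and d: "e1 \<noteq> e2"
    and nd: "\<not> degenerate G c e1 e2"
    and no_edge_cut: "\<not> (\<exists>e0 \<in> edges G. c \<in> ends G e0 \<and> \<not> connected (del_edges G {e0, e1, e2}))"
    and comps: "components (del_vert (del_edges G {e1, e2}) c) = {C1, C2}" "C1 \<noteq> C2"
  shows "good_piece (glue G (insert c C1) [ends G e1 \<inter> C1, ends G e2 \<inter> C1, {c}]) G"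
proof -
  have critical: "\<forall>f \<in> edges G. \<not> two_half_connected (del_edges G {f})"
    using cr unfolding critical_two_half_connected_def by blast
  have min: "minimal_cut G {c} {e1, e2}" by (rule three_connected_minimal_cut_vertex_edges[OF mg tc])
  have s: "separation G {c} {e1, e2} C1 C2"
    using minimal_cut_separation_components[OF mg min _ _ comps(2)] comps(1)
    by (simp add: del_vert_eq_del_verts)
  obtain u1 v1 u2 v2 where ends: "ends G e1 = {u1, v1}" "ends G e2 = {u2, v2}"
    and C1: "u1 \<in> C1" "u2 \<in> C1" and C2: "v1 \<in> C2" "v2 \<in> C2"
    using minimal_cut_crossing(3)[OF mg min _ s] by (metis insertCI)
  have "u1 \<noteq> u2" by (rule vertex_cut_ends_distinct[OF mg tc critical s d E ends C1 C2 nd])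
  moreover have "v1 \<noteq> v2"
    using vertex_cut_ends_distinct[OF mg tc critical separation_sym[OF s] d E _ _ C2 C1 nd] ends
    by (simp add: insert_commute)
  ultimately interpret gluing G "insert c C1" C2 "[u1, u2, c]"
    by (rule gluing_vertex_cut[OF mg tc critical s cV E ends C1 C2 _ _ no_edge_cut])
  have "[ends G e1 \<inter> C1, ends G e2 \<inter> C1, {c}] = map (\<lambda>x. {x}) [u1, u2, c]"
    using ends C1 C2 separationD(1)[OF s] by auto
  then show ?thesis using good_piece_glued[OF critical] unfolding glued_def by simp
qed

lemma good_pieces_vertex_cut:
  assumes "mgraph G" "three_connected G" "critical_two_half_connected G"
    and "c \<in> verts G" "e1 \<in> edges G" "e2 \<in> edges G" "e1 \<noteq> e2" "\<not> degenerate G c e1 e2"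
    and "\<not> (\<exists>e0 \<in> edges G. c \<in> ends G e0 \<and> \<not> connected (del_edges G {e0, e1, e2}))"
    and comps: "components (del_vert (del_edges G {e1, e2}) c) = {C1, C2}" "C1 \<noteq> C2"
  shows "good_piece (glue G (insert c C1) [ends G e1 \<inter> C1, ends G e2 \<inter> C1, {c}]) G"
    and "good_piece (glue G (insert c C2) [ends G e1 \<inter> C2, ends G e2 \<inter> C2, {c}]) G"
proof -
  have "components (del_vert (del_edges G {e1, e2}) c) = {C2, C1}"
    using comps(1) by (simp add: insert_commute)
  then show "good_piece (glue G (insert c C2) [ends G e1 \<inter> C2, ends G e2 \<inter> C2, {c}]) G"
    using good_piece_vertex_cut[OF assms(1-9)] comps(2) by blast
qed (rule good_piece_vertex_cut[OF assms])

theorem theorem7: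
  fixes G :: "('v, 'e) mgraph" and c :: 'v and e1 e2 :: 'e
  assumes "mgraph G"
    and "three_connected G"
    and "v2e_separator G c e1 e2"
    and "\<not> degenerate G c e1 e2"
  shows "(\<forall>e0 C1 C2. e0 \<in> edges G \<and> c \<in> ends G e0 \<and>
            components (del_edges G {e0, e1, e2}) = {C1, C2} \<and> C1 \<noteq> C2 \<and>
            critical_two_half_connected G \<longrightarrow>
              good_piece (glue G C1 [ends G e0 \<inter> C1, ends G e1 \<inter> C1, ends G e2 \<inter> C1]) G \<and>
              good_piece (glue G C2 [ends G e0 \<inter> C2, ends G e1 \<inter> C2, ends G e2 \<inter> C2]) G)
       \<and> (\<not> (\<exists>e0 \<in> edges G. c \<in> ends G e0 \<and> \<not> connected (del_edges G {e0, e1, e2})) \<longrightarrow>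
            card (components (del_vert (del_edges G {e1, e2}) c)) = 2 \<and>
            (critical_two_half_connected G \<longrightarrow>
              (\<forall>C1 C2. components (del_vert (del_edges G {e1, e2}) c) = {C1, C2} \<and> C1 \<noteq> C2 \<longrightarrow>
                good_piece (glue G (insert c C1) [ends G e1 \<inter> C1, ends G e2 \<inter> C1, {c}]) G \<and>
                good_piece (glue G (insert c C2) [ends G e1 \<inter> C2, ends G e2 \<inter> C2, {c}]) G)))"
proof -
  obtain A B where s: "separation G {c} {e1, e2} A B"
    and c: "c \<in> verts G" "e1 \<in> edges G" "e2 \<in> edges G" "e1 \<noteq> e2"
      "c \<notin> ends G e1" "c \<notin> ends G e2"
    using v2e_separator_separation[OF assms(1-3)] by blast
  note pieces = good_pieces_edge_cut[OF assms(1,2) _ _ c(2,3) _ c(5,6) assms(4)]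
    good_pieces_vertex_cut[OF assms(1,2) _ c(1-4) assms(4)]
  show ?thesis
    by (intro conjI allI impI; (elim conjE)?; (rule pieces; assumption)?)
      (rule card_components_vertex_cut[OF assms(1,2) s])
qed

end
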